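(* The class of pseudo-orientable ribbon graphs is minor-closed: if $\mathbb{G}$ is pseudo-orientable, then every ribbon graph obtained from $\mathbb{G}$ by a sequence of edge deletions, vertex deletions and partial duals is pseudo-orientable.
   Context: A ribbon graph $\mathbb{G}$ is a surface with boundary written as the union of vertex discs and edge discs $E(\mathbb{G})$ meeting in disjoint line segments, each on the boundary of exactly one vertex and one edge, with each edge containing exactly two such segments. For connected $\mathbb{G}$, a quasi-tree is $F\subseteq E(\mathbb{G})$ such that the spanning ribbon subgraph $(V(\mathbb{G}),F)$ has exactly one boundary component; in general, a union of quasi-trees of the components. For $X\subseteq E(\mathbb{G})$, the partial dual $\mathbb{G}^X$ has the same edges and as vertices discs glued along each boundary component of $(V(\mathbb{G}),X)$ (interiors disjoint from each other and from edges), the old vertices being discarded. A bouquet is a ribbon graph with one vertex; a loop is orientable if with the vertex it forms an annulus, non-orientable if a Möbius band. A bouquet is pseudo-orientable if its vertex boundary circle is the union of two closed arcs $S_1,S_2$ meeting in exactly two points such that both ends of each orientable loop lie in the interior of one $S_i$ and each non-orientable loop has one end in the interior of each of $S_1,S_2$. A connected ribbon graph is pseudo-orientable if $\mathbb{G}^X$ is a pseudo-orientable bouquet for some quasi-tree $X$; a general one is pseudo-orientable if one component is pseudo-orientable and all others are orientable. *)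

theory Defs
  imports Main
begin

text \<open>
Combinatorial model of ribbon graphs: graph-encoded maps (flag systems).
A ribbon graph is a finite set of flags with three fixed-point-free
involutions tau0 (change vertex-end, keep edge and side),
tau1 (change edge, keep vertex and corner), tau2 (change side, keep vertex and edge),
with tau0 tau2 = tau2 tau0 fixed-point-free, together with a number of
isolated vertices (vertices with no incident edges, which carry no flags).
Vertices = orbits of tau1,tau2; edges = orbits of tau0,tau2;
boundary components = orbits of tau0,tau1 (plus one per isolated vertex).
\<close>

record 'f rgraph =
  fl   :: "'f set"
  tau0 :: "'f \<Rightarrow> 'f"
  tau1 :: "'f \<Rightarrow> 'f"
  tau2 :: "'f \<Rightarrow> 'f"
  niso :: nat

definition nonempty_rg :: "'f rgraph \<Rightarrow> bool" where
  "nonempty_rg G \<longleftrightarrow> fl G \<noteq> {} \<or> niso G > 0"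

definition rg :: "'f rgraph \<Rightarrow> bool" where
  "rg G \<longleftrightarrow> finite (fl G) \<and> nonempty_rg G \<and>
     (\<forall>x\<in>fl G.
        tau0 G x \<in> fl G \<and> tau1 G x \<in> fl G \<and> tau2 G x \<in> fl G \<and>
        tau0 G (tau0 G x) = x \<and> tau1 G (tau1 G x) = x \<and> tau2 G (tau2 G x) = x \<and>
        tau0 G x \<noteq> x \<and> tau1 G x \<noteq> x \<and> tau2 G x \<noteq> x \<and>
        tau0 G (tau2 G x) = tau2 G (tau0 G x) \<and> tau0 G (tau2 G x) \<noteq> x)"

definition orb :: "'f rgraph \<Rightarrow> ('f \<Rightarrow> 'f) set \<Rightarrow> 'f \<Rightarrow> 'f set" where
  "orb G ts x = {y. (\<lambda>a b. a \<in> fl G \<and> (\<exists>t\<in>ts. b = t a))\<^sup>*\<^sup>* x y}"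

definition vertex_of :: "'f rgraph \<Rightarrow> 'f \<Rightarrow> 'f set" where
  "vertex_of G x = orb G {tau1 G, tau2 G} x"

definition edge_of :: "'f rgraph \<Rightarrow> 'f \<Rightarrow> 'f set" where
  "edge_of G x = {x, tau0 G x, tau2 G x, tau0 G (tau2 G x)}"

definition edges :: "'f rgraph \<Rightarrow> 'f set set" where
  "edges G = {edge_of G x | x. x \<in> fl G}"

definition nverts :: "'f rgraph \<Rightarrow> nat" where
  "nverts G = card {vertex_of G x | x. x \<in> fl G} + niso G"

definition nbound :: "'f rgraph \<Rightarrow> nat" where
  "nbound G = card {orb G {tau0 G, tau1 G} x | x. x \<in> fl G} + niso G"

text \<open>Deletion of a set Y of edges; vertices all of whose edges are deleted become isolated.\<close>
definition del_edges :: "'f rgraph \<Rightarrow> 'f set set \<Rightarrow> 'f rgraph" where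
  "del_edges G Y =
     (let F' = fl G - \<Union>Y;
          newiso = card {vertex_of G x | x. x \<in> fl G \<and> vertex_of G x \<subseteq> \<Union>Y}
      in G\<lparr> fl := F',
            tau1 := (\<lambda>x. tau1 G (((tau2 G \<circ> tau1 G) ^^
                        (LEAST k. tau1 G (((tau2 G \<circ> tau1 G) ^^ k) x) \<in> F')) x)),
            niso := niso G + newiso \<rparr>)"

definition del_vertex :: "'f rgraph \<Rightarrow> 'f \<Rightarrow> 'f rgraph" where
  "del_vertex G x =
     (let H = del_edges G {e \<in> edges G. e \<inter> vertex_of G x \<noteq> {}}
      in H\<lparr> niso := niso H - 1 \<rparr>)"

definition pdual :: "'f rgraph \<Rightarrow> 'f set set \<Rightarrow> 'f rgraph" where
  "pdual G X = G\<lparr> tau0 := (\<lambda>x. if x \<in> \<Union>X then tau2 G x else tau0 G x),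
                  tau2 := (\<lambda>x. if x \<in> \<Union>X then tau0 G x else tau2 G x) \<rparr>"

definition orientable :: "'f rgraph \<Rightarrow> bool" where
  "orientable G \<longleftrightarrow> (\<exists>c :: 'f \<Rightarrow> bool. \<forall>x\<in>fl G.
      c (tau0 G x) \<noteq> c x \<and> c (tau1 G x) \<noteq> c x \<and> c (tau2 G x) \<noteq> c x)"

definition fcomps :: "'f rgraph \<Rightarrow> 'f set set" where
  "fcomps G = {orb G {tau0 G, tau1 G, tau2 G} x | x. x \<in> fl G}"

definition restr :: "'f rgraph \<Rightarrow> 'f set \<Rightarrow> 'f rgraph" where
  "restr G C = G\<lparr> fl := C, niso := 0 \<rparr>"

definition isov :: "'f rgraph \<Rightarrow> 'f rgraph" where
  "isov G = G\<lparr> fl := {}, niso := 1 \<rparr>"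

definition bouquet :: "'f rgraph \<Rightarrow> bool" where
  "bouquet G \<longleftrightarrow> nverts G = 1"

definition loop_sub :: "'f rgraph \<Rightarrow> 'f \<Rightarrow> 'f rgraph" where
  "loop_sub G x = del_edges G (edges G - {edge_of G x})"

text \<open>Pseudo-orientable bouquet: the edge-ends around the vertex are labelled by the
  arc S1/S2 (s) containing them; the labelling changes at no more than two corners
  (so S1, S2 are arcs meeting in two points), orientable loops have both ends on the
  same arc and non-orientable loops have one end on each arc.\<close>
definition po_bouquet :: "'f rgraph \<Rightarrow> bool" where
  "po_bouquet G \<longleftrightarrow> bouquet G \<and>
     (\<exists>s :: 'f \<Rightarrow> bool.
        (\<forall>x\<in>fl G. s (tau2 G x) = s x) \<and>
        card {{x, tau1 G x} | x. x \<in> fl G \<and> s x \<noteq> s (tau1 G x)} \<le> 2 \<and>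
        (\<forall>x\<in>fl G. (orientable (loop_sub G x) \<longrightarrow> s (tau0 G x) = s x) \<and>
                   (\<not> orientable (loop_sub G x) \<longrightarrow> s (tau0 G x) \<noteq> s x)))"

text \<open>Quasi-tree of a connected ribbon graph: spanning subgraph (V,X) has one boundary component.\<close>
definition qtree_conn :: "'f rgraph \<Rightarrow> 'f set set \<Rightarrow> bool" where
  "qtree_conn G X \<longleftrightarrow> X \<subseteq> edges G \<and> nbound (del_edges G (edges G - X)) = 1"

definition po_conn :: "'f rgraph \<Rightarrow> bool" where
  "po_conn G \<longleftrightarrow> (\<exists>X. qtree_conn G X \<and> po_bouquet (pdual G X))"

text \<open>General: one component pseudo-orientable, all others orientable.
  (Isolated-vertex components are trivially orientable.)\<close>
definition pseudo_orientable :: "'f rgraph \<Rightarrow> bool" where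
  "pseudo_orientable G \<longleftrightarrow>
     (\<exists>C\<in>fcomps G. po_conn (restr G C) \<and>
        (\<forall>D\<in>fcomps G. D \<noteq> C \<longrightarrow> orientable (restr G D))) \<or>
     (niso G > 0 \<and> po_conn (isov G) \<and> (\<forall>D\<in>fcomps G. orientable (restr G D)))"

inductive minor_step :: "'f rgraph \<Rightarrow> 'f rgraph \<Rightarrow> bool" where
  del_edge: "rg G \<Longrightarrow> e \<in> edges G \<Longrightarrow> minor_step G (del_edges G {e})"
| del_vert: "rg G \<Longrightarrow> x \<in> fl G \<Longrightarrow> nonempty_rg (del_vertex G x) \<Longrightarrow>
             minor_step G (del_vertex G x)"
| del_isov: "rg G \<Longrightarrow> niso G > 0 \<Longrightarrow> nonempty_rg (G\<lparr>niso := niso G - 1\<rparr>) \<Longrightarrow>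
             minor_step G (G\<lparr>niso := niso G - 1\<rparr>)"
| pdual: "rg G \<Longrightarrow> X \<subseteq> edges G \<Longrightarrow> minor_step G (pdual G X)"

end

(*
  Call a 2-colouring c of the flags a po-colouring if it changes along tau0 and tau2 everywhere
  and stays constant across at most two corners (tau1-pairs), its defect corners.  A ribbon
  graph is pseudo-orientable iff it has a po-colouring, and po-colourings survive all three
  minor operations.

  On a pseudo-orientable bouquet, c = cv xor s is a po-colouring, where cv properly colours the
  single vertex and s labels each flag by its arc S1 or S2; a loop is orientable exactly when
  tau0 does not change cv.  Partial duals only exchange tau0 and tau2 on some edges, so they
  preserve po-colourings, and orientable components are coloured by orientations.  Conversely,
  each component carries an even number of defect corners, so all defects lie in one component
  and the others are orientable; a partial dual of that component with fewest vertices is a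
  bouquet, and its dualised edge set is a quasi-tree because the vertices of a partial dual are
  the boundary components of the corresponding spanning subgraph.

  Deleting edges turns each corner into a walk around a vertex of the original graph; walks of
  distinct new corners are disjoint, and a walk whose ends have equal colour contains a defect,
  so deletion does not increase the number of defect corners.
*)
theory Submission
  imports Defs
begin

section \<open>Orbits of sets of maps\<close>

definition orbit_on :: "'f set \<Rightarrow> ('f \<Rightarrow> 'f) set \<Rightarrow> 'f \<Rightarrow> 'f set" where
  "orbit_on F ts x = {y. (\<lambda>a b. a \<in> F \<and> (\<exists>t\<in>ts. b = t a))\<^sup>*\<^sup>* x y}"

definition fpf_involution_on :: "'f set \<Rightarrow> ('f \<Rightarrow> 'f) \<Rightarrow> bool" where
  "fpf_involution_on F f \<longleftrightarrow> (\<forall>x\<in>F. f x \<in> F \<and> f (f x) = x \<and> f x \<noteq> x)"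

lemma orb_eq_orbit_on: "orb G ts = orbit_on (fl G) ts"
  by (simp add: orb_def orbit_on_def fun_eq_iff)

lemma orbit_on_refl: "x \<in> orbit_on F ts x"
  by (simp add: orbit_on_def)

lemma orbit_on_step: "y \<in> orbit_on F ts x \<Longrightarrow> y \<in> F \<Longrightarrow> t \<in> ts \<Longrightarrow> t y \<in> orbit_on F ts x"
  unfolding orbit_on_def by (auto intro: rtranclp.rtrancl_into_rtrancl)

lemma orbit_on_subsetI:
  assumes "x \<in> S" "\<And>a t. a \<in> S \<Longrightarrow> a \<in> F \<Longrightarrow> t \<in> ts \<Longrightarrow> t a \<in> S"
  shows "orbit_on F ts x \<subseteq> S"
proof
  fix y assume "y \<in> orbit_on F ts x"
  hence "(\<lambda>a b. a \<in> F \<and> (\<exists>t\<in>ts. b = t a))\<^sup>*\<^sup>* x y" by (simp add: orbit_on_def)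
  thus "y \<in> S"
    by (induction rule: rtranclp_induct) (use assms in auto)
qed

lemma orbit_on_trans: "y \<in> orbit_on F ts x \<Longrightarrow> orbit_on F ts y \<subseteq> orbit_on F ts x"
  by (rule orbit_on_subsetI) (auto intro: orbit_on_step)

lemma orbit_on_subset:
  assumes "\<And>t. t \<in> ts \<Longrightarrow> fpf_involution_on F t" "x \<in> F"
  shows "orbit_on F ts x \<subseteq> F"
  using assms by (intro orbit_on_subsetI) (auto simp: fpf_involution_on_def)

lemma orbit_on_sym:
  assumes inv: "\<And>t. t \<in> ts \<Longrightarrow> fpf_involution_on F t" and x: "x \<in> F" and y: "y \<in> orbit_on F ts x"
  shows "x \<in> orbit_on F ts y"
proof -
  have "(\<lambda>a b. a \<in> F \<and> (\<exists>t\<in>ts. b = t a))\<^sup>*\<^sup>* x y" using y by (simp add: orbit_on_def)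
  hence "x \<in> orbit_on F ts y \<and> y \<in> F"
  proof (induction rule: rtranclp_induct)
    case base then show ?case using x by (simp add: orbit_on_refl)
  next
    case (step b c)
    then obtain t where t: "t \<in> ts" "c = t b" "b \<in> F" by auto
    have cF: "c \<in> F" and tc: "t c = b" using inv[OF t(1)] t by (auto simp: fpf_involution_on_def)
    have "b \<in> orbit_on F ts c" using orbit_on_step[OF orbit_on_refl cF t(1)] tc by simp
    hence "orbit_on F ts b \<subseteq> orbit_on F ts c" by (rule orbit_on_trans)
    then show ?case using step cF by blast
  qed
  thus ?thesis by simp
qed

lemma orbit_on_eq:
  assumes "\<And>t. t \<in> ts \<Longrightarrow> fpf_involution_on F t" "x \<in> F" "y \<in> orbit_on F ts x"
  shows "orbit_on F ts y = orbit_on F ts x"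
  using orbit_on_trans[OF assms(3)] orbit_on_trans[OF orbit_on_sym[OF assms]] by blast

lemma orbit_on_cong:
  assumes "\<And>a b. a \<in> F \<Longrightarrow> (\<exists>t\<in>ts. b = t a) \<longleftrightarrow> (\<exists>t\<in>ts'. b = t a)"
  shows "orbit_on F ts = orbit_on F ts'"
proof -
  have "(\<lambda>a b. a \<in> F \<and> (\<exists>t\<in>ts. b = t a)) = (\<lambda>a b. a \<in> F \<and> (\<exists>t\<in>ts'. b = t a))"
    using assms by (auto simp: fun_eq_iff)
  thus ?thesis by (simp add: orbit_on_def fun_eq_iff)
qed

lemma orbit_on_restrict:
  assumes SF: "S \<subseteq> F" and closed: "\<And>a t. a \<in> S \<Longrightarrow> t \<in> ts \<Longrightarrow> t a \<in> S" and x: "x \<in> S"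
  shows "orbit_on S ts x = orbit_on F ts x"
proof
  have OS: "orbit_on S ts x \<subseteq> S" by (rule orbit_on_subsetI) (use x closed in auto)
  show "orbit_on S ts x \<subseteq> orbit_on F ts x"
    by (rule orbit_on_subsetI) (use SF in \<open>auto simp: orbit_on_refl orbit_on_step subsetD\<close>)
  show "orbit_on F ts x \<subseteq> orbit_on S ts x"
    by (rule orbit_on_subsetI) (use OS in \<open>auto simp: orbit_on_refl orbit_on_step subsetD\<close>)
qed

lemma orbit_on_change_off_subset:
  assumes agree: "\<And>z. z \<notin> A \<Longrightarrow> g z = g' z" and avoid: "orbit_on F {f, g} x \<subseteq> F - A"
  shows "orbit_on F {f, g'} x \<subseteq> orbit_on F {f, g} x"
proof (rule orbit_on_subsetI)
  fix a t assume a: "a \<in> orbit_on F {f, g} x" "a \<in> F" "t \<in> {f, g'}"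
  have "a \<notin> A" using a(1) avoid by blast
  thus "t a \<in> orbit_on F {f, g} x"
    using a orbit_on_step[OF a(1,2), of f] orbit_on_step[OF a(1,2), of g] agree by auto
qed (rule orbit_on_refl)

lemma orbit_on_change_off:
  assumes agree: "\<And>z. z \<notin> A \<Longrightarrow> g z = g' z" and avoid: "orbit_on F {f, g} x \<subseteq> F - A"
  shows "orbit_on F {f, g'} x = orbit_on F {f, g} x"
proof
  show sub: "orbit_on F {f, g'} x \<subseteq> orbit_on F {f, g} x"
    by (rule orbit_on_change_off_subset[OF agree avoid])
  have agree': "\<And>z. z \<notin> A \<Longrightarrow> g' z = g z" using agree by metis
  show "orbit_on F {f, g} x \<subseteq> orbit_on F {f, g'} x"
    by (rule orbit_on_change_off_subset[OF agree' subset_trans[OF sub avoid]])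
qed

lemma orbits_avoiding_change_off:
  assumes agree: "\<And>z. z \<notin> A \<Longrightarrow> g z = g' z"
  shows "{orbit_on F {f, g'} x | x. x \<in> F \<and> orbit_on F {f, g'} x \<subseteq> F - A} =
         {orbit_on F {f, g} x | x. x \<in> F \<and> orbit_on F {f, g} x \<subseteq> F - A}"
proof (rule Collect_cong, rule ex_cong1)
  have agree': "\<And>z. z \<notin> A \<Longrightarrow> g' z = g z" using agree by metis
  fix Q x
  show "(Q = orbit_on F {f, g'} x \<and> x \<in> F \<and> orbit_on F {f, g'} x \<subseteq> F - A) \<longleftrightarrow>
        (Q = orbit_on F {f, g} x \<and> x \<in> F \<and> orbit_on F {f, g} x \<subseteq> F - A)"
  proof (cases "orbit_on F {f, g} x \<subseteq> F - A")
    case True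
    then show ?thesis using orbit_on_change_off[OF agree True] by simp
  next
    case False
    have "\<not> orbit_on F {f, g'} x \<subseteq> F - A"
    proof
      assume "orbit_on F {f, g'} x \<subseteq> F - A"
      with orbit_on_change_off[OF agree' this] False show False by simp
    qed
    then show ?thesis using False by simp
  qed
qed

lemma card_fpf_involution_pairs:
  assumes "finite S" "fpf_involution_on S f"
  shows "card S = 2 * card ((\<lambda>y. {y, f y}) ` S)"
proof -
  have "2 * card ((\<lambda>y. {y, f y}) ` S) = card (\<Union>((\<lambda>y. {y, f y}) ` S))"
  proof (rule card_partition)
    show "card c = 2" if c: "c \<in> (\<lambda>y. {y, f y}) ` S" for c
      using that assms(2) by (auto simp: fpf_involution_on_def)
    show "c1 \<inter> c2 = {}"
      if c: "c1 \<in> (\<lambda>y. {y, f y}) ` S" "c2 \<in> (\<lambda>y. {y, f y}) ` S" "c1 \<noteq> c2" for c1 c2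
    proof -
      obtain a b where ab: "a \<in> S" "b \<in> S" "c1 = {a, f a}" "c2 = {b, f b}" using c by blast
      have ff: "f (f a) = a" "f (f b) = b" using ab assms(2) by (auto simp: fpf_involution_on_def)
      show ?thesis
      proof (rule ccontr)
        assume "c1 \<inter> c2 \<noteq> {}"
        then obtain z where "z \<in> {a, f a}" "z \<in> {b, f b}" using ab by blast
        hence "a = b \<or> a = f b" using ff by (metis insertE singletonD)
        hence "c1 = c2" using ab ff by auto
        thus False using c(3) by simp
      qed
    qed
  qed (use assms in \<open>auto simp: fpf_involution_on_def\<close>)
  also have "\<Union>((\<lambda>y. {y, f y}) ` S) = S"
    using assms(2) by (auto simp: fpf_involution_on_def)
  finally show ?thesis by simp
qed

section \<open>First-return maps of two involutions\<close>

definition alt_walk :: "('f \<Rightarrow> 'f) \<Rightarrow> ('f \<Rightarrow> 'f) \<Rightarrow> nat \<Rightarrow> 'f \<Rightarrow> 'f" where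
  "alt_walk f g j = (g \<circ> f) ^^ j"

lemma alt_walk_0 [simp]: "alt_walk f g 0 y = y"
  by (simp add: alt_walk_def)

lemma alt_walk_Suc [simp]: "alt_walk f g (Suc j) y = g (f (alt_walk f g j y))"
  by (simp add: alt_walk_def)

lemma alt_walk_add: "alt_walk f g (i + j) y = alt_walk f g i (alt_walk f g j y)"
  by (simp add: alt_walk_def funpow_add)

definition return_time :: "('f \<Rightarrow> 'f) \<Rightarrow> ('f \<Rightarrow> 'f) \<Rightarrow> 'f set \<Rightarrow> 'f \<Rightarrow> nat" where
  "return_time f g A y = (LEAST k. f (alt_walk f g k y) \<in> A)"

definition first_return :: "('f \<Rightarrow> 'f) \<Rightarrow> ('f \<Rightarrow> 'f) \<Rightarrow> 'f set \<Rightarrow> 'f \<Rightarrow> 'f" where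
  "first_return f g A y = f (alt_walk f g (return_time f g A y) y)"

locale involution_pair =
  fixes F :: "'f set" and f g :: "'f \<Rightarrow> 'f"
  assumes finite_F: "finite F" and fpf_f: "fpf_involution_on F f" and fpf_g: "fpf_involution_on F g"
begin

abbreviation walk :: "nat \<Rightarrow> 'f \<Rightarrow> 'f" where
  "walk \<equiv> alt_walk f g"

lemma f_in: "x \<in> F \<Longrightarrow> f x \<in> F" and f_f: "x \<in> F \<Longrightarrow> f (f x) = x"
  and f_neq: "x \<in> F \<Longrightarrow> f x \<noteq> x" and g_in: "x \<in> F \<Longrightarrow> g x \<in> F"
  and g_g: "x \<in> F \<Longrightarrow> g (g x) = x" and g_neq: "x \<in> F \<Longrightarrow> g x \<noteq> x"
  using fpf_f fpf_g by (auto simp: fpf_involution_on_def)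

lemma walk_in: "y \<in> F \<Longrightarrow> walk j y \<in> F"
  by (induction j) (auto simp: f_in g_in)

lemma walk_inj: "a \<in> F \<Longrightarrow> b \<in> F \<Longrightarrow> walk j a = walk j b \<Longrightarrow> a = b"
proof (induction j)
  case (Suc j)
  have "g (f (walk j a)) = g (f (walk j b))" using Suc.prems by simp
  hence "walk j a = walk j b" by (metis f_f f_in g_g walk_in Suc.prems(1,2))
  then show ?case using Suc by blast
qed simp

lemma walk_periodic:
  assumes y: "y \<in> F" shows "\<exists>n>0. walk n y = y"
proof -
  have "\<not> inj_on (\<lambda>i. walk i y) {0..card F}"
  proof
    assume "inj_on (\<lambda>i. walk i y) {0..card F}"
    hence "card ((\<lambda>i. walk i y) ` {0..card F}) = card F + 1" by (simp add: card_image)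
    moreover have "card ((\<lambda>i. walk i y) ` {0..card F}) \<le> card F"
      using walk_in y finite_F by (intro card_mono) auto
    ultimately show False by simp
  qed
  then obtain i j where neq: "i \<noteq> j" and eq: "walk i y = walk j y" unfolding inj_on_def by blast
  define a b where "a = min i j" and "b = max i j"
  have ab: "a < b" "walk a y = walk b y" using neq eq by (auto simp: a_def b_def min_def max_def)
  hence "walk a y = walk a (walk (b - a) y)" by (simp flip: alt_walk_add)
  hence "y = walk (b - a) y" using walk_inj y walk_in by blast
  thus ?thesis using ab(1) by (intro exI[of _ "b - a"]) simp
qed

lemma walk_mult: "walk n y = y \<Longrightarrow> walk (n * k) y = y"
  by (induction k) (simp_all add: alt_walk_add)

lemma f_neq_walk: "y \<in> F \<Longrightarrow> f y \<noteq> walk m y"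
proof (induction m arbitrary: y rule: less_induct)
  case (less m y)
  consider "m = 0" | "m = 1" | m' where "m = Suc (Suc m')" by (metis One_nat_def not0_implies_Suc)
  then show ?case
  proof cases
    case 1
    then show ?thesis using f_neq[OF less.prems] by simp
  next
    case 2
    then show ?thesis using g_neq[OF f_in[OF less.prems]] by (metis One_nat_def alt_walk_0 alt_walk_Suc)
  next
    case 3
    show ?thesis
    proof
      assume "f y = walk m y"
      hence "f y = g (f (walk (Suc m') y))" using 3 by simp
      hence "f (g (f y)) = walk (Suc m') y" using less.prems by (metis f_f f_in g_g walk_in)
      also have "\<dots> = walk m' (g (f y))" using alt_walk_add[of f g m' 1 y] by simp
      finally show False using less.IH[of m' "g (f y)"] 3 less.prems f_in g_in by simp
    qed
  qed
qed

lemma g_walk_eq_f_walk: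
  assumes x0: "x0 \<in> F" shows "\<exists>j. g (walk i x0) = f (walk j x0)"
proof (cases i)
  case 0
  obtain n where "n > 0" "walk n x0 = x0" using walk_periodic[OF x0] by blast
  then obtain n' where "g (f (walk n' x0)) = x0" by (metis gr0_implies_Suc alt_walk_Suc)
  hence "g x0 = f (walk n' x0)" using x0 by (metis g_g f_in walk_in)
  then show ?thesis using 0 by auto
next
  case (Suc i')
  then have "g (walk i x0) = f (walk i' x0)" using x0 by (simp add: g_g f_in walk_in)
  then show ?thesis by blast
qed

lemma f_walk_neq_walk:
  assumes x0: "x0 \<in> F" shows "f (walk i x0) \<noteq> walk j x0"
proof
  assume eq: "f (walk i x0) = walk j x0"
  obtain n where n: "n > 0" "walk n x0 = x0" using walk_periodic[OF x0] by blast
  have "i \<le> n * i" using n(1) by simp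
  hence "j + n * i - i + i = j + n * i" by linarith
  hence "walk (j + n * i - i) (walk i x0) = walk j (walk (n * i) x0)"
    by (metis alt_walk_add)
  also have "\<dots> = f (walk i x0)" using walk_mult[OF n(2)] eq by simp
  finally show False using f_neq_walk[OF walk_in[OF x0]] by metis
qed

lemma walk_in_orbit: "y \<in> F \<Longrightarrow> walk j y \<in> orbit_on F {f, g} y"
proof (induction j)
  case (Suc j)
  have "f (walk j y) \<in> orbit_on F {f, g} y"
    using orbit_on_step[OF Suc.IH[OF Suc.prems] walk_in[OF Suc.prems], of f] by simp
  then show ?case using orbit_on_step[of "f (walk j y)" F "{f, g}" y g] f_in walk_in Suc.prems by simp
qed (simp add: orbit_on_refl)

lemma f_walk_in_orbit:
  assumes "y \<in> F" shows "f (walk j y) \<in> orbit_on F {f, g} y"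
  by (rule orbit_on_step[OF walk_in_orbit[OF assms] walk_in[OF assms]]) simp

lemma orbit_subset_walks:
  assumes x0: "x0 \<in> F"
  shows "orbit_on F {f, g} x0 \<subseteq> range (\<lambda>i. walk i x0) \<union> range (\<lambda>i. f (walk i x0))"
proof (rule orbit_on_subsetI)
  show "x0 \<in> range (\<lambda>i. walk i x0) \<union> range (\<lambda>i. f (walk i x0))"
    using rangeI[of "\<lambda>i. walk i x0" 0] by simp
next
  fix a t assume a: "a \<in> range (\<lambda>i. walk i x0) \<union> range (\<lambda>i. f (walk i x0))" "t \<in> {f, g}"
  then consider i where "a = walk i x0" | i where "a = f (walk i x0)" by blast
  then show "t a \<in> range (\<lambda>i. walk i x0) \<union> range (\<lambda>i. f (walk i x0))"
  proof cases
    case 1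
    then show ?thesis using a(2) g_walk_eq_f_walk[OF x0, of i] by auto
  next
    case 2
    have "f a \<in> range (\<lambda>i. walk i x0)" using 2 x0 by (simp add: f_f walk_in)
    moreover have "g a \<in> range (\<lambda>i. walk i x0)" using 2 by (intro range_eqI[of _ _ "Suc i"]) simp
    ultimately show ?thesis using a(2) by blast
  qed
qed

lemma alternating_colouring_of_orbit:
  assumes x0: "x0 \<in> F" and orbit: "F \<subseteq> orbit_on F {f, g} x0"
  shows "\<exists>c::'f \<Rightarrow> bool. \<forall>y\<in>F. c (f y) \<noteq> c y \<and> c (g y) \<noteq> c y"
proof -
  define c where "c y \<longleftrightarrow> (\<exists>i. y = walk i x0)" for y
  have not_c: "\<not> c (f (walk i x0))" for i
    using f_walk_neq_walk[OF x0] by (auto simp: c_def)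
  have "c (f y) \<noteq> c y \<and> c (g y) \<noteq> c y" if y: "y \<in> F" for y
  proof -
    have "y \<in> range (\<lambda>i. walk i x0) \<union> range (\<lambda>i. f (walk i x0))"
      using orbit_subset_walks[OF x0] orbit y by blast
    then consider i where "y = walk i x0" | i where "y = f (walk i x0)" by blast
    then show ?thesis
    proof cases
      case 1
      then show ?thesis using not_c g_walk_eq_f_walk[OF x0, of i] by (auto simp: c_def)
    next
      case 2
      have "c (f y)" unfolding c_def using 2 x0 by (auto simp: f_f walk_in)
      moreover have "c (g y)" unfolding c_def using 2 by (intro exI[of _ "Suc i"]) simp
      ultimately show ?thesis using 2 not_c by simp
    qed
  qed
  thus ?thesis by blast
qed

end

text \<open>In the intended instance f = tau1, g = tau2 and A is a union of edges: ret is the corner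
  map around the vertices once all edges outside A are deleted, so the orbits of g and ret on
  A are the vertices of that deletion.\<close>
locale induced_involution = involution_pair +
  fixes A :: "'a set"
  assumes A_subset: "A \<subseteq> F" and g_A: "x \<in> A \<Longrightarrow> g x \<in> A"
    and g_outside_A: "x \<in> F \<Longrightarrow> x \<notin> A \<Longrightarrow> g x \<notin> A"
begin

abbreviation rtime :: "'a \<Rightarrow> nat" where
  "rtime \<equiv> return_time f g A"

abbreviation ret :: "'a \<Rightarrow> 'a" where
  "ret \<equiv> first_return f g A"

lemma A_in: "y \<in> A \<Longrightarrow> y \<in> F"
  using A_subset by blast

lemma return_exists:
  assumes y: "y \<in> A" shows "\<exists>k. f (walk k y) \<in> A"
proof -
  obtain n where "n > 0" "walk n y = y" using walk_periodic A_in[OF y] by blast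
  then obtain m where "g (f (walk m y)) = y" by (metis gr0_implies_Suc alt_walk_Suc)
  hence "f (walk m y) = g y" by (metis g_g f_in walk_in A_in[OF y])
  thus ?thesis using g_A[OF y] by metis
qed

lemma first_return_in: "y \<in> A \<Longrightarrow> ret y \<in> A"
  unfolding first_return_def return_time_def by (rule LeastI_ex[OF return_exists])

lemma before_return: "j < rtime y \<Longrightarrow> f (walk j y) \<notin> A"
  unfolding return_time_def by (rule not_less_Least)

lemma walk_first_return:
  assumes y: "y \<in> A"
  shows "j \<le> rtime y \<Longrightarrow> walk j (ret y) = f (walk (rtime y - j) y)"
proof (induction j)
  case (Suc j)
  define m where "m = rtime y - Suc j"
  have m: "rtime y - j = Suc m" using Suc.prems unfolding m_def by simp
  have "walk (Suc j) (ret y) = g (f (f (walk (rtime y - j) y)))"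
    using Suc by simp
  also have "\<dots> = g (g (f (walk m y)))" using m A_in[OF y] by (simp add: f_f g_in f_in walk_in)
  also have "\<dots> = f (walk m y)" using g_g f_in walk_in A_in[OF y] by simp
  finally show ?case unfolding m_def .
qed (simp add: first_return_def)

lemma return_time_first_return:
  assumes y: "y \<in> A" shows "rtime (ret y) = rtime y"
  unfolding return_time_def[of f g A "ret y"]
proof (rule Least_equality)
  have walk: "f (walk j (ret y)) = walk (rtime y - j) y" if "j \<le> rtime y" for j
    using walk_first_return[OF y that] f_f walk_in A_in[OF y] by simp
  show "f (walk (rtime y) (ret y)) \<in> A" using walk[of "rtime y"] y by simp
  fix j assume j: "f (walk j (ret y)) \<in> A"
  show "rtime y \<le> j"
  proof (rule ccontr)
    assume "\<not> rtime y \<le> j"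
    define m where "m = rtime y - Suc j"
    have m: "rtime y - j = Suc m" "m < rtime y" using \<open>\<not> rtime y \<le> j\<close> unfolding m_def by auto
    have "f (walk m y) \<notin> A" by (rule before_return[OF m(2)])
    hence "f (walk j (ret y)) \<notin> A"
      using walk[of j] m(1) g_outside_A f_in walk_in A_in[OF y] \<open>\<not> rtime y \<le> j\<close> by simp
    thus False using j by contradiction
  qed
qed

lemma first_return_first_return: "y \<in> A \<Longrightarrow> ret (ret y) = y"
  using walk_first_return[of y "rtime y"] return_time_first_return[of y]
  by (simp add: first_return_def f_f walk_in A_in)

lemma first_return_neq:
  assumes y: "y \<in> A" shows "ret y \<noteq> y"
proof
  assume eq: "ret y = y"
  have walk: "walk j y = f (walk (rtime y - j) y)" if "j \<le> rtime y" for j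
    using walk_first_return[OF y that] unfolding eq .
  define m where "m = rtime y div 2"
  have "rtime y = 2 * m \<or> rtime y = 2 * m + 1" unfolding m_def by presburger
  then show False
  proof
    assume "rtime y = 2 * m"
    hence "walk m y = f (walk m y)" using walk[of m] by simp
    thus False using f_neq walk_in A_in[OF y] by metis
  next
    assume "rtime y = 2 * m + 1"
    hence "walk m y = f (walk (Suc m) y)" using walk[of m] by (simp add: Suc_diff_le)
    hence "f (walk m y) = f (f (g (f (walk m y))))" by simp
    hence "f (walk m y) = g (f (walk m y))" using A_in[OF y] by (simp add: f_f g_in f_in walk_in)
    thus False using g_neq f_in walk_in A_in[OF y] by metis
  qed
qed

lemma fpf_involution_first_return: "fpf_involution_on A ret"
  unfolding fpf_involution_on_def
  using first_return_in first_return_first_return first_return_neq by blast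

lemma fpf_involution_g_A: "fpf_involution_on A g"
  unfolding fpf_involution_on_def using g_A g_g g_neq A_in by blast

lemma first_return_in_orbit: "y \<in> A \<Longrightarrow> ret y \<in> orbit_on F {f, g} y"
  unfolding first_return_def by (rule f_walk_in_orbit[OF A_in])

text \<open>An orbit of f and g through A is covered by the return walks starting from its points
  in A, and these walks meet A only at their ends.\<close>
definition return_paths :: "'a set \<Rightarrow> 'a set" where
  "return_paths R = {walk j z | z j. z \<in> R \<and> j \<le> rtime z} \<union> {f (walk j z) | z j. z \<in> R \<and> j \<le> rtime z}"

context
  fixes R assumes R: "R \<subseteq> A" and g_R: "\<And>z. z \<in> R \<Longrightarrow> g z \<in> R"
    and ret_R: "\<And>z. z \<in> R \<Longrightarrow> ret z \<in> R"
begin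

lemma return_paths_closed_walk:
  assumes z: "z \<in> R" "j \<le> rtime z" and t: "t \<in> {f, g}"
  shows "t (walk j z) \<in> return_paths R"
proof -
  have zF: "z \<in> F" using z R A_in by blast
  consider "t = f" | "t = g" "j = 0" | i where "t = g" "j = Suc i" using t by (cases j) auto
  then show ?thesis
  proof cases
    case 2
    then have "t (walk j z) = walk 0 (g z)" by simp
    then show ?thesis unfolding return_paths_def using g_R[OF z(1)] by blast
  next
    case 3
    then have "t (walk j z) = f (walk i z)" using zF by (simp add: g_g f_in walk_in)
    then show ?thesis unfolding return_paths_def using z 3 by fastforce
  qed (use z in \<open>auto simp: return_paths_def\<close>)
qed

lemma return_paths_closed_f_walk:
  assumes z: "z \<in> R" "j \<le> rtime z" and t: "t \<in> {f, g}"
  shows "t (f (walk j z)) \<in> return_paths R"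
proof -
  have zF: "z \<in> F" using z R A_in by blast
  consider "t = f" | "t = g" "j < rtime z" | "t = g" "j = rtime z" using t z(2) by fastforce
  then show ?thesis
  proof cases
    case 1
    then have "t (f (walk j z)) = walk j z" using zF by (simp add: f_f walk_in)
    then show ?thesis unfolding return_paths_def using z by blast
  next
    case 3
    then have "t (f (walk j z)) = walk 0 (g (ret z))" by (simp add: first_return_def)
    then show ?thesis unfolding return_paths_def using g_R[OF ret_R[OF z(1)]] by blast
  qed (use z in \<open>auto simp: return_paths_def intro!: exI[of _ "Suc j"]\<close>)
qed

lemma orbit_subset_return_paths:
  assumes a: "a \<in> R"
  shows "orbit_on F {f, g} a \<subseteq> return_paths R"
proof (rule orbit_on_subsetI)
  show "a \<in> return_paths R"
    unfolding return_paths_def using a by (intro UnI1 CollectI exI[of _ a] exI[of _ 0]) simp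
next
  fix u t assume u: "u \<in> return_paths R" and t: "t \<in> {f, g}"
  then consider z j where "z \<in> R" "j \<le> rtime z" "u = walk j z"
    | z j where "z \<in> R" "j \<le> rtime z" "u = f (walk j z)"
    unfolding return_paths_def by blast
  then show "t u \<in> return_paths R"
  proof cases
    case 1
    then show ?thesis using return_paths_closed_walk[OF 1(1,2) t] by simp
  next
    case 2
    then show ?thesis using return_paths_closed_f_walk[OF 2(1,2) t] by simp
  qed
qed

end

lemma return_paths_inter_A:
  assumes R: "R \<subseteq> A" and ret_R: "\<And>z. z \<in> R \<Longrightarrow> ret z \<in> R"
  shows "return_paths R \<inter> A \<subseteq> R"
proof
  fix u assume "u \<in> return_paths R \<inter> A"
  then consider z j where "z \<in> R" "j \<le> rtime z" "u = walk j z" "u \<in> A"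
    | z j where "z \<in> R" "j \<le> rtime z" "u = f (walk j z)" "u \<in> A"
    unfolding return_paths_def by blast
  then show "u \<in> R"
  proof cases
    case 1
    have zF: "z \<in> F" using 1 R A_in by blast
    show ?thesis
    proof (cases j)
      case (Suc i)
      have "f (walk i z) \<notin> A" using before_return 1(2) Suc by simp
      hence "u \<notin> A" using 1 Suc g_outside_A f_in walk_in zF by simp
      then show ?thesis using 1 by simp
    qed (use 1 in simp)
  next
    case 2
    show ?thesis
    proof (cases "j < rtime z")
      case True then show ?thesis using before_return 2 by blast
    next
      case False
      hence "u = ret z" using 2 by (simp add: first_return_def)
      then show ?thesis using ret_R 2 by simp
    qed
  qed
qed

lemma orbit_inter_A:
  assumes a: "a \<in> A"
  shows "orbit_on F {f, g} a \<inter> A = orbit_on A {g, ret} a"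
proof
  let ?R = "orbit_on A {g, ret} a"
  have inv: "\<And>t. t \<in> {g, ret} \<Longrightarrow> fpf_involution_on A t"
    using fpf_involution_g_A fpf_involution_first_return by blast
  have R: "?R \<subseteq> A" by (rule orbit_on_subset[OF inv a])
  have g_R: "g z \<in> ?R" and ret_R: "ret z \<in> ?R" if "z \<in> ?R" for z
    using orbit_on_step[OF that] that R by blast+
  show "orbit_on F {f, g} a \<inter> A \<subseteq> ?R"
    using orbit_subset_return_paths[OF R g_R ret_R orbit_on_refl] return_paths_inter_A[OF R ret_R]
    by blast
  show "?R \<subseteq> orbit_on F {f, g} a \<inter> A"
  proof (rule orbit_on_subsetI)
    fix b t assume b: "b \<in> orbit_on F {f, g} a \<inter> A" "t \<in> {g, ret}"
    have "g b \<in> orbit_on F {f, g} a" using orbit_on_step[of b F "{f, g}" a g] b A_in by blast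
    moreover have "ret b \<in> orbit_on F {f, g} a"
      using first_return_in_orbit[of b] orbit_on_trans[of b F "{f, g}" a] b by blast
    ultimately show "t b \<in> orbit_on F {f, g} a \<inter> A" using b g_A first_return_in by blast
  qed (use a orbit_on_refl in fast)
qed

lemma card_orbits_meeting_A:
  "card {orbit_on F {f, g} x | x. x \<in> A} = card {orbit_on A {g, ret} x | x. x \<in> A}"
proof -
  have inv: "\<And>t. t \<in> {f, g} \<Longrightarrow> fpf_involution_on F t" using fpf_f fpf_g by blast
  have "inj_on (\<lambda>Q. Q \<inter> A) {orbit_on F {f, g} x | x. x \<in> A}"
  proof (rule inj_onI)
    fix Q Q' assume "Q \<in> {orbit_on F {f, g} x | x. x \<in> A}" "Q' \<in> {orbit_on F {f, g} x | x. x \<in> A}"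
      and eq: "Q \<inter> A = Q' \<inter> A"
    then obtain a a' where a: "Q = orbit_on F {f, g} a" "a \<in> A" "Q' = orbit_on F {f, g} a'" "a' \<in> A"
      by blast
    have "a \<in> Q \<inter> A" using a(1,2) orbit_on_refl by simp
    hence "a \<in> orbit_on F {f, g} a'" using eq a(3) by simp
    from orbit_on_eq[OF inv A_in[OF a(4)] this] show "Q = Q'" using a(1,3) by simp
  qed
  moreover have "(\<lambda>Q. Q \<inter> A) ` {orbit_on F {f, g} x | x. x \<in> A} = (\<lambda>x. orbit_on F {f, g} x \<inter> A) ` A"
    by blast
  moreover have "\<dots> = {orbit_on A {g, ret} x | x. x \<in> A}"
    using orbit_inter_A by auto
  ultimately show ?thesis using card_image by fastforce
qed

lemma card_orbits:
  "card {orbit_on F {f, g} x | x. x \<in> F} =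
   card {orbit_on A {g, ret} x | x. x \<in> A} +
   card {orbit_on F {f, g} x | x. x \<in> F \<and> orbit_on F {f, g} x \<subseteq> F - A}"
proof -
  have inv: "\<And>t. t \<in> {f, g} \<Longrightarrow> fpf_involution_on F t" using fpf_f fpf_g by blast
  let ?meet = "{orbit_on F {f, g} x | x. x \<in> A}"
  let ?avoid = "{orbit_on F {f, g} x | x. x \<in> F \<and> orbit_on F {f, g} x \<subseteq> F - A}"
  have "{orbit_on F {f, g} x | x. x \<in> F} = ?meet \<union> ?avoid"
  proof (intro equalityI subsetI)
    fix Q assume "Q \<in> {orbit_on F {f, g} x | x. x \<in> F}"
    then obtain x where x: "Q = orbit_on F {f, g} x" "x \<in> F" by blast
    show "Q \<in> ?meet \<union> ?avoid"
    proof (cases "Q \<subseteq> F - A")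
      case False
      then obtain a where a: "a \<in> Q" "a \<in> A" using orbit_on_subset[OF inv x(2)] x by blast
      hence "Q = orbit_on F {f, g} a" using orbit_on_eq[OF inv x(2)] x by metis
      then show ?thesis using a by blast
    qed (use x in blast)
  qed (use A_in in blast)
  moreover have "?meet \<inter> ?avoid = {}" using orbit_on_refl by fast
  moreover have "finite ?meet" "finite ?avoid"
    by (rule finite_subset[OF _ finite_imageI[OF finite_F]], use A_in in blast)+
  ultimately show ?thesis using card_orbits_meeting_A by (simp add: card_Un_disjoint)
qed

lemma first_return_cong:
  assumes agree: "\<And>z. z \<notin> A \<Longrightarrow> g' z = g z" and y: "y \<in> A"
  shows "first_return f g' A y = ret y"
proof -
  have walk_eq: "alt_walk f g' j y = walk j y" if "j \<le> rtime y" for j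
    using that
  proof (induction j)
    case (Suc j)
    then show ?case using agree before_return[of j y] by simp
  qed simp
  have "return_time f g' A y = rtime y"
    unfolding return_time_def[of f g' A y]
  proof (rule Least_equality)
    show "f (alt_walk f g' (rtime y) y) \<in> A"
      using walk_eq first_return_in[OF y] by (simp add: first_return_def)
    show "rtime y \<le> j" if "f (alt_walk f g' j y) \<in> A" for j
      using that walk_eq[of j] before_return[of j y] by (cases "j < rtime y") auto
  qed
  then show ?thesis using walk_eq by (simp add: first_return_def)
qed

lemma walk_unique:
  assumes x: "x \<in> A" "j \<le> rtime x" and x': "x' \<in> A" "j' \<le> rtime x'"
    and eq: "walk j x = walk j' x'"
  shows "x = x'"
proof -
  have aux: "x = x'"
    if "x \<in> A" "x' \<in> A" "j \<le> j'" "j' \<le> rtime x'" "walk j x = walk j' x'" for x x' j j'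
  proof -
    define d where "d = j' - j"
    have "walk j' x' = walk j (walk d x')" using that(3) unfolding d_def by (simp flip: alt_walk_add)
    hence xd: "x = walk d x'" using that(1,2,5) walk_inj walk_in A_in by metis
    show ?thesis
    proof (cases d)
      case (Suc e)
      have "f (walk e x') \<notin> A" using before_return Suc that(3,4) unfolding d_def by simp
      hence "g (f (walk e x')) \<notin> A" using g_outside_A f_in walk_in A_in[OF that(2)] by blast
      then show ?thesis using xd Suc that(1) by simp
    qed (use xd in simp)
  qed
  show ?thesis
    using aux[OF x(1) x'(1) _ x'(2) eq] aux[OF x'(1) x(1) _ x(2) eq[symmetric]] by (cases "j \<le> j'") auto
qed

lemma corner_unique:
  assumes x: "x \<in> A" "j \<le> rtime x" and x': "x' \<in> A" "j' \<le> rtime x'"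
    and eq: "{walk j x, f (walk j x)} = {walk j' x', f (walk j' x')}"
  shows "{x, ret x} = {x', ret x'}"
proof -
  have "walk j x = walk j' x' \<or> walk j x = f (walk j' x')" using eq by (auto simp: doubleton_eq_iff)
  then show ?thesis
  proof
    assume "walk j x = walk j' x'"
    then show ?thesis using walk_unique[OF x x'] by simp
  next
    assume h: "walk j x = f (walk j' x')"
    have "walk (rtime x' - j') (ret x') = f (walk j' x')"
      using walk_first_return[OF x'(1), of "rtime x' - j'"] x'(2) by simp
    hence "x = ret x'"
      using walk_unique[OF x, of "ret x'" "rtime x' - j'"] h first_return_in[OF x'(1)]
        return_time_first_return[OF x'(1)] by simp
    then show ?thesis using first_return_first_return[OF x'(1)] by auto
  qed
qed

lemma defect_on_return_path:
  fixes c :: "'a \<Rightarrow> bool"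
  assumes c_g: "\<And>y. y \<in> F \<Longrightarrow> c (g y) \<noteq> c y" and x: "x \<in> A" and same: "c (ret x) = c x"
  shows "\<exists>j \<le> rtime x. c (f (walk j x)) = c (walk j x)"
proof (rule ccontr)
  assume "\<not> ?thesis"
  hence alt: "\<And>j. j \<le> rtime x \<Longrightarrow> c (f (walk j x)) \<noteq> c (walk j x)" by blast
  have "c (walk j x) = c x" if "j \<le> rtime x" for j
    using that
  proof (induction j)
    case (Suc j)
    have "c (g (f (walk j x))) \<noteq> c (f (walk j x))" using c_g f_in walk_in A_in[OF x] by blast
    then show ?case using Suc alt[of j] by simp
  qed simp
  thus False using alt[of "rtime x"] same by (simp add: first_return_def)
qed

lemma first_return_alternates:
  fixes c :: "'a \<Rightarrow> bool"
  assumes c: "\<And>y. y \<in> F \<Longrightarrow> c (f y) \<noteq> c y \<and> c (g y) \<noteq> c y" and y: "y \<in> A"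
  shows "c (ret y) \<noteq> c y"
proof
  assume "c (ret y) = c y"
  then obtain j where "c (f (walk j y)) = c (walk j y)" using defect_on_return_path c y by blast
  thus False using c walk_in A_in[OF y] by blast
qed

text \<open>Distinct corners {x, ret x} are traced by return walks sharing no f-step, and since c
  changes along g, a walk whose ends have equal colour contains an f-step with equal colours.\<close>
lemma card_return_defects_le:
  fixes c :: "'a \<Rightarrow> bool"
  assumes c_g: "\<And>y. y \<in> F \<Longrightarrow> c (g y) \<noteq> c y"
  shows "card {{x, ret x} | x. x \<in> A \<and> c (ret x) = c x} \<le> card {{x, f x} | x. x \<in> F \<and> c (f x) = c x}"
proof -
  let ?N = "{{x, ret x} | x. x \<in> A \<and> c (ret x) = c x}"
  let ?O = "{{x, f x} | x. x \<in> F \<and> c (f x) = c x}"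
  have "\<forall>N\<in>?N. \<exists>P. \<exists>x j. x \<in> A \<and> N = {x, ret x} \<and> j \<le> rtime x \<and>
      P = {walk j x, f (walk j x)} \<and> c (f (walk j x)) = c (walk j x)"
    using defect_on_return_path[of c, OF c_g] by blast
  then have "\<exists>h. \<forall>N\<in>?N. \<exists>x j. x \<in> A \<and> N = {x, ret x} \<and> j \<le> rtime x \<and>
      h N = {walk j x, f (walk j x)} \<and> c (f (walk j x)) = c (walk j x)"
    by (rule bchoice)
  then obtain h where h: "\<forall>N\<in>?N. \<exists>x j. x \<in> A \<and> N = {x, ret x} \<and> j \<le> rtime x \<and>
      h N = {walk j x, f (walk j x)} \<and> c (f (walk j x)) = c (walk j x)"
    by blast
  have "h N \<in> ?O" if N: "N \<in> ?N" for N
  proof -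
    obtain x j where "x \<in> A" "h N = {walk j x, f (walk j x)}" "c (f (walk j x)) = c (walk j x)"
      using h N by blast
    moreover have "walk j x \<in> F" using walk_in A_in \<open>x \<in> A\<close> by blast
    ultimately show ?thesis by blast
  qed
  hence "h ` ?N \<subseteq> ?O" by blast
  moreover have "inj_on h ?N"
  proof (rule inj_onI)
    fix N N' assume N: "N \<in> ?N" "N' \<in> ?N" "h N = h N'"
    obtain x j where "x \<in> A" "N = {x, ret x}" "j \<le> rtime x" "h N = {walk j x, f (walk j x)}"
      using h N(1) by blast
    moreover obtain x' j' where "x' \<in> A" "N' = {x', ret x'}" "j' \<le> rtime x'"
      "h N' = {walk j' x', f (walk j' x')}"
      using h N(2) by blast
    ultimately show "N = N'" using corner_unique N(3) by metis
  qed
  moreover have "finite ?O"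
    by (rule finite_subset[OF _ finite_imageI[OF finite_F, of "\<lambda>x. {x, f x}"]]) blast
  ultimately show ?thesis by (simp add: card_inj_on_le)
qed
end

section \<open>Flag systems\<close>

definition flag_system :: "'f rgraph \<Rightarrow> bool" where
  "flag_system G \<longleftrightarrow> finite (fl G) \<and>
     (\<forall>x\<in>fl G.
        tau0 G x \<in> fl G \<and> tau1 G x \<in> fl G \<and> tau2 G x \<in> fl G \<and>
        tau0 G (tau0 G x) = x \<and> tau1 G (tau1 G x) = x \<and> tau2 G (tau2 G x) = x \<and>
        tau0 G x \<noteq> x \<and> tau1 G x \<noteq> x \<and> tau2 G x \<noteq> x \<and>
        tau0 G (tau2 G x) = tau2 G (tau0 G x) \<and> tau0 G (tau2 G x) \<noteq> x)"

lemma rg_iff_flag_system: "rg G \<longleftrightarrow> flag_system G \<and> nonempty_rg G"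
  unfolding rg_def flag_system_def by blast

lemma flag_system_update_niso [simp]: "flag_system (G\<lparr>niso := n\<rparr>) = flag_system G"
  unfolding flag_system_def by simp

lemma flag_systemD:
  assumes "flag_system G" "x \<in> fl G"
  shows "tau0 G x \<in> fl G" "tau1 G x \<in> fl G" "tau2 G x \<in> fl G"
    "tau0 G (tau0 G x) = x" "tau1 G (tau1 G x) = x" "tau2 G (tau2 G x) = x"
    "tau0 G x \<noteq> x" "tau1 G x \<noteq> x" "tau2 G x \<noteq> x"
    "tau0 G (tau2 G x) = tau2 G (tau0 G x)" "tau0 G (tau2 G x) \<noteq> x"
  using assms by (auto simp: flag_system_def)

lemma flag_system_finite: "flag_system G \<Longrightarrow> finite (fl G)"
  by (simp add: flag_system_def)

lemma fpf_involution_tau: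
  assumes "flag_system G"
  shows "fpf_involution_on (fl G) (tau0 G)" "fpf_involution_on (fl G) (tau1 G)"
    "fpf_involution_on (fl G) (tau2 G)"
  using flag_systemD[OF assms] by (auto simp: fpf_involution_on_def)

lemma tau02_simps:
  assumes "flag_system G" "x \<in> fl G"
  shows "tau2 G (tau0 G (tau2 G x)) = tau0 G x" "tau0 G (tau2 G (tau0 G x)) = tau2 G x"
    "tau0 G (tau0 G (tau2 G x)) = tau2 G x" "tau2 G (tau2 G (tau0 G x)) = tau0 G x"
    "tau0 G (tau2 G x) \<in> fl G" "tau2 G (tau0 G x) \<noteq> x" "tau0 G x \<noteq> tau2 G x"
proof -
  note r = flag_systemD[OF assms]
  note r0 = flag_systemD[OF assms(1) r(1)] and r2 = flag_systemD[OF assms(1) r(3)]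
  show "tau2 G (tau0 G (tau2 G x)) = tau0 G x" using r r0 by metis
  show "tau0 G (tau2 G (tau0 G x)) = tau2 G x" using r r2 by metis
  show "tau0 G (tau0 G (tau2 G x)) = tau2 G x" using r2 by metis
  show "tau2 G (tau2 G (tau0 G x)) = tau0 G x" using r0 by metis
  show "tau0 G (tau2 G x) \<in> fl G" using r2 by metis
  show "tau2 G (tau0 G x) \<noteq> x" using r by metis
  show "tau0 G x \<noteq> tau2 G x" using r by metis
qed

lemma edge_of_self: "x \<in> edge_of G x"
  by (simp add: edge_of_def)

lemma edge_of_in_edges: "x \<in> fl G \<Longrightarrow> edge_of G x \<in> edges G"
  by (auto simp: edges_def)

lemma edge_of_subset:
  assumes "flag_system G" "x \<in> fl G" shows "edge_of G x \<subseteq> fl G"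
  using flag_systemD[OF assms] tau02_simps[OF assms] assms(2) by (auto simp: edge_of_def)

lemma edge_of_closed:
  assumes "flag_system G" "x \<in> fl G" "y \<in> edge_of G x"
  shows "tau0 G y \<in> edge_of G x" "tau2 G y \<in> edge_of G x"
  using flag_systemD[OF assms(1,2)] tau02_simps[OF assms(1,2)] assms(3) by (auto simp: edge_of_def)

lemma edge_of_eq:
  assumes "flag_system G" "x \<in> fl G" "y \<in> edge_of G x"
  shows "edge_of G y = edge_of G x"
proof -
  have "y = x \<or> y = tau0 G x \<or> y = tau2 G x \<or> y = tau0 G (tau2 G x)"
    using assms(3) by (auto simp: edge_of_def)
  then show ?thesis
    using flag_systemD[OF assms(1,2)] tau02_simps[OF assms(1,2)] by (elim disjE) (auto simp: edge_of_def)
qed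

lemma edges_disjoint:
  assumes "flag_system G" "e \<in> edges G" "e' \<in> edges G" "y \<in> e" "y \<in> e'"
  shows "e = e'"
proof -
  obtain x x' where "e = edge_of G x" "x \<in> fl G" "e' = edge_of G x'" "x' \<in> fl G"
    using assms(2,3) by (auto simp: edges_def)
  thus ?thesis using edge_of_eq[OF assms(1)] assms(4,5) by metis
qed

lemma edges_subset:
  assumes "flag_system G" "e \<in> edges G" shows "e \<subseteq> fl G"
proof -
  obtain x where "e = edge_of G x" "x \<in> fl G" using assms(2) by (auto simp: edges_def)
  thus ?thesis using edge_of_subset[OF assms(1)] by simp
qed

lemma Union_edges_closed:
  assumes "flag_system G" "Y \<subseteq> edges G" "y \<in> \<Union>Y"
  shows "tau0 G y \<in> \<Union>Y" "tau2 G y \<in> \<Union>Y"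
proof -
  obtain x where "edge_of G x \<in> Y" "x \<in> fl G" "y \<in> edge_of G x"
    using assms(2,3) by (auto simp: edges_def)
  then show "tau0 G y \<in> \<Union>Y" "tau2 G y \<in> \<Union>Y" using edge_of_closed[OF assms(1)] by blast+
qed

lemma Union_edges_compl_closed:
  assumes "flag_system G" "Y \<subseteq> edges G" "y \<in> fl G" "y \<notin> \<Union>Y"
  shows "tau0 G y \<notin> \<Union>Y" "tau2 G y \<notin> \<Union>Y"
  using Union_edges_closed[OF assms(1,2)] flag_systemD[OF assms(1,3)] assms(4) by metis+

lemma Union_diff_edges:
  assumes G: "flag_system G" and X: "X \<subseteq> edges G"
  shows "\<Union>(edges G - X) = fl G - \<Union>X"
proof
  show "\<Union>(edges G - X) \<subseteq> fl G - \<Union>X"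
  proof
    fix z assume "z \<in> \<Union>(edges G - X)"
    then obtain e where e: "e \<in> edges G" "e \<notin> X" "z \<in> e" by blast
    have "z \<in> fl G" using edges_subset[OF G e(1)] e(3) by (rule subsetD)
    moreover have "z \<notin> \<Union>X"
    proof
      assume "z \<in> \<Union>X"
      then obtain e' where e': "e' \<in> X" "z \<in> e'" by blast
      hence "e' = e" using edges_disjoint[OF G _ e(1) e'(2) e(3)] X by blast
      thus False using e'(1) e(2) by simp
    qed
    ultimately show "z \<in> fl G - \<Union>X" by blast
  qed
  show "fl G - \<Union>X \<subseteq> \<Union>(edges G - X)"
  proof
    fix z assume z: "z \<in> fl G - \<Union>X"
    have "edge_of G z \<in> edges G" using z by (simp add: edge_of_in_edges)
    moreover have "edge_of G z \<notin> X" using z edge_of_self[of z G] by blast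
    ultimately show "z \<in> \<Union>(edges G - X)" using edge_of_self[of z G] by (intro UnionI[of "edge_of G z"]) auto
  qed
qed

lemma del_edges_simps:
  "fl (del_edges G Y) = fl G - \<Union>Y"
  "tau0 (del_edges G Y) = tau0 G"
  "tau2 (del_edges G Y) = tau2 G"
  "tau1 (del_edges G Y) = first_return (tau1 G) (tau2 G) (fl G - \<Union>Y)"
  "niso (del_edges G Y) = niso G + card {vertex_of G x | x. x \<in> fl G \<and> vertex_of G x \<subseteq> \<Union>Y}"
  by (simp_all add: del_edges_def Let_def first_return_def return_time_def alt_walk_def fun_eq_iff)

lemma induced_involution_del_edges:
  assumes "flag_system G" "Y \<subseteq> edges G"
  shows "induced_involution (fl G) (tau1 G) (tau2 G) (fl G - \<Union>Y)"
  using flag_system_finite[OF assms(1)] fpf_involution_tau[OF assms(1)]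
    Union_edges_closed[OF assms] Union_edges_compl_closed[OF assms] flag_systemD[OF assms(1)]
  by unfold_locales auto

lemma flag_system_del_edges:
  assumes "flag_system G" "Y \<subseteq> edges G"
  shows "flag_system (del_edges G Y)"
proof -
  interpret induced_involution "fl G" "tau1 G" "tau2 G" "fl G - \<Union>Y"
    by (rule induced_involution_del_edges[OF assms])
  show ?thesis
    unfolding flag_system_def del_edges_simps
    using flag_system_finite[OF assms(1)] flag_systemD[OF assms(1)] Union_edges_compl_closed[OF assms]
      first_return_in first_return_first_return first_return_neq
    by auto
qed

lemma vertex_of_eq_orbit_on: "vertex_of G x = orbit_on (fl G) {tau1 G, tau2 G} x"
  by (simp add: vertex_of_def orb_eq_orbit_on)

lemma vertex_of_subset: "flag_system G \<Longrightarrow> x \<in> fl G \<Longrightarrow> vertex_of G x \<subseteq> fl G"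
  unfolding vertex_of_eq_orbit_on using fpf_involution_tau by (intro orbit_on_subset) auto

lemma nonempty_del_edges:
  assumes "rg G" "Y \<subseteq> edges G"
  shows "nonempty_rg (del_edges G Y)"
proof (cases "fl G - \<Union>Y = {} \<and> fl G \<noteq> {}")
  case True
  then obtain x where x: "x \<in> fl G" by blast
  have G: "flag_system G" using assms(1) rg_iff_flag_system by blast
  let ?S = "{vertex_of G x | x. x \<in> fl G \<and> vertex_of G x \<subseteq> \<Union>Y}"
  have "vertex_of G x \<in> ?S" using vertex_of_subset[OF G x] True x by blast
  moreover have "finite ?S"
    by (rule finite_subset[OF _ finite_imageI[OF flag_system_finite[OF G], of "vertex_of G"]]) blast
  ultimately have "card ?S > 0" by (auto simp: card_gt_0_iff)
  then show ?thesis by (simp add: nonempty_rg_def del_edges_simps)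
qed (use assms(1) in \<open>auto simp: nonempty_rg_def del_edges_simps rg_def\<close>)

lemma pdual_simps:
  "fl (pdual G X) = fl G" "tau1 (pdual G X) = tau1 G" "niso (pdual G X) = niso G"
  "tau0 (pdual G X) = (\<lambda>x. if x \<in> \<Union>X then tau2 G x else tau0 G x)"
  "tau2 (pdual G X) = (\<lambda>x. if x \<in> \<Union>X then tau0 G x else tau2 G x)"
  by (simp_all add: pdual_def)

lemma flag_system_pdual:
  assumes "flag_system G" "X \<subseteq> edges G"
  shows "flag_system (pdual G X)"
  unfolding flag_system_def pdual_simps
  using flag_system_finite[OF assms(1)] flag_systemD[OF assms(1)] tau02_simps[OF assms(1)]
    Union_edges_closed[OF assms] Union_edges_compl_closed[OF assms]
  by (auto split: if_splits)

lemma nonempty_pdual [simp]: "nonempty_rg (pdual G X) = nonempty_rg G"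
  by (simp add: nonempty_rg_def pdual_simps)

lemma edge_of_pdual:
  assumes "flag_system G" "X \<subseteq> edges G" "x \<in> fl G"
  shows "edge_of (pdual G X) x = edge_of G x"
  using Union_edges_closed[OF assms(1,2)] Union_edges_compl_closed[OF assms(1,2)]
    flag_systemD[OF assms(1,3)] assms(3)
  by (auto simp: edge_of_def pdual_simps)

lemma vertex_of_eq:
  assumes B: "flag_system B" and x: "x \<in> fl B" and y: "y \<in> vertex_of B x"
  shows "vertex_of B y = vertex_of B x"
  unfolding vertex_of_eq_orbit_on
  by (rule orbit_on_eq) (use fpf_involution_tau[OF B] x y in \<open>auto simp: vertex_of_eq_orbit_on\<close>)

lemma tau12_in_vertex_of:
  assumes "flag_system B" "x \<in> fl B"
  shows "tau1 B x \<in> vertex_of B x" "tau2 B x \<in> vertex_of B x"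
  unfolding vertex_of_eq_orbit_on using assms by (auto intro: orbit_on_step[OF orbit_on_refl])

lemma vertex_of_tau2:
  assumes "flag_system B" "x \<in> fl B"
  shows "vertex_of B (tau2 B x) = vertex_of B x"
  using vertex_of_eq[OF assms tau12_in_vertex_of(2)[OF assms]] .

lemma fl_diff_other_edges:
  assumes B: "flag_system B" and x: "x \<in> fl B"
  shows "fl B - \<Union>(edges B - {edge_of B x}) = edge_of B x"
  using Union_diff_edges[OF B, of "{edge_of B x}"] edge_of_in_edges[OF x] edge_of_subset[OF B x]
  by auto

lemma induced_involution_edge_of:
  assumes "flag_system B" "x \<in> fl B"
  shows "induced_involution (fl B) (tau1 B) (tau2 B) (edge_of B x)"
  using induced_involution_del_edges[OF assms(1), of "edges B - {edge_of B x}"]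
  unfolding fl_diff_other_edges[OF assms] by simp

lemma loop_sub_simps:
  assumes "flag_system B" "x \<in> fl B"
  shows "fl (loop_sub B x) = edge_of B x" "tau0 (loop_sub B x) = tau0 B"
    "tau2 (loop_sub B x) = tau2 B" "tau1 (loop_sub B x) = first_return (tau1 B) (tau2 B) (edge_of B x)"
  unfolding loop_sub_def del_edges_simps fl_diff_other_edges[OF assms] by simp_all

definition component_of :: "'f rgraph \<Rightarrow> 'f \<Rightarrow> 'f set" where
  "component_of G x = orbit_on (fl G) {tau0 G, tau1 G, tau2 G} x"

lemma fcomps_eq: "fcomps G = {component_of G x | x. x \<in> fl G}"
  by (simp add: fcomps_def component_of_def orb_eq_orbit_on)

lemma fpf_involution_on_taus:
  "flag_system G \<Longrightarrow> t \<in> {tau0 G, tau1 G, tau2 G} \<Longrightarrow> fpf_involution_on (fl G) t"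
  using fpf_involution_tau by blast

lemma component_of_self: "x \<in> component_of G x"
  unfolding component_of_def by (rule orbit_on_refl)

lemma component_of_subset: "flag_system G \<Longrightarrow> x \<in> fl G \<Longrightarrow> component_of G x \<subseteq> fl G"
  unfolding component_of_def by (rule orbit_on_subset) (auto intro: fpf_involution_on_taus)

lemma component_of_closed:
  assumes "flag_system G" "x \<in> fl G" "y \<in> component_of G x"
  shows "tau0 G y \<in> component_of G x" "tau1 G y \<in> component_of G x" "tau2 G y \<in> component_of G x"
  using orbit_on_step[of y "fl G" "{tau0 G, tau1 G, tau2 G}" x] component_of_subset[OF assms(1,2)] assms(3)
  unfolding component_of_def by auto

lemma component_of_eq:
  assumes "flag_system G" "x \<in> fl G" "y \<in> component_of G x"
  shows "component_of G y = component_of G x"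
  using orbit_on_eq[OF fpf_involution_on_taus[OF assms(1)] assms(2)] assms(3)
  unfolding component_of_def by blast

lemma restr_simps:
  "fl (restr G C) = C" "tau0 (restr G C) = tau0 G" "tau1 (restr G C) = tau1 G"
  "tau2 (restr G C) = tau2 G" "niso (restr G C) = 0"
  by (simp_all add: restr_def)

lemma flag_system_restr:
  assumes "flag_system G" "C \<subseteq> fl G" "\<forall>y\<in>C. tau0 G y \<in> C \<and> tau1 G y \<in> C \<and> tau2 G y \<in> C"
  shows "flag_system (restr G C)"
  unfolding flag_system_def restr_simps
  using assms(3) flag_systemD[OF assms(1) subsetD[OF assms(2)]]
    finite_subset[OF assms(2) flag_system_finite[OF assms(1)]]
  by simp

lemma nverts_eq_card_orbits: "nverts G = card {orbit_on (fl G) {tau1 G, tau2 G} x | x. x \<in> fl G} + niso G"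
  by (simp add: nverts_def vertex_of_eq_orbit_on)

lemma induced_involution_pdual:
  assumes G: "flag_system G" and X: "X \<subseteq> edges G"
  shows "induced_involution (fl G) (tau1 G) (tau2 (pdual G X)) (\<Union>X)"
proof
  show "finite (fl G)" by (rule flag_system_finite[OF G])
  show "fpf_involution_on (fl G) (tau1 G)" by (rule fpf_involution_tau(2)[OF G])
  show "fpf_involution_on (fl G) (tau2 (pdual G X))"
    using fpf_involution_tau(3)[OF flag_system_pdual[OF G X]] by (simp add: pdual_simps)
  show "\<Union>X \<subseteq> fl G" using edges_subset[OF G] X by blast
  show "\<And>x. x \<in> \<Union>X \<Longrightarrow> tau2 (pdual G X) x \<in> \<Union>X"
    using Union_edges_closed[OF G X] by (simp add: pdual_simps)
  show "\<And>x. x \<in> fl G \<Longrightarrow> x \<notin> \<Union>X \<Longrightarrow> tau2 (pdual G X) x \<notin> \<Union>X"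
    using Union_edges_compl_closed[OF G X] by (simp add: pdual_simps)
qed

section \<open>Po-colourings and minor operations\<close>

definition defect_corners :: "('f \<Rightarrow> bool) \<Rightarrow> 'f rgraph \<Rightarrow> 'f set set" where
  "defect_corners c G = {{x, tau1 G x} | x. x \<in> fl G \<and> c (tau1 G x) = c x}"

text \<open>A po-colouring is an orientation away from at most two corners, the points where the
  arcs S1 and S2 of a pseudo-orientable bouquet meet.\<close>
definition po_colouring :: "('f \<Rightarrow> bool) \<Rightarrow> 'f rgraph \<Rightarrow> bool" where
  "po_colouring c G \<longleftrightarrow>
     (\<forall>x\<in>fl G. c (tau0 G x) \<noteq> c x \<and> c (tau2 G x) \<noteq> c x) \<and> card (defect_corners c G) \<le> 2"

lemma po_colouring_update_niso [simp]: "po_colouring c (G\<lparr>niso := n\<rparr>) = po_colouring c G"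
  by (simp add: po_colouring_def defect_corners_def)

lemma po_colouring_pdual [simp]: "po_colouring c (pdual G X) = po_colouring c G"
proof -
  have "(\<forall>x\<in>fl G. c (tau0 (pdual G X) x) \<noteq> c x \<and> c (tau2 (pdual G X) x) \<noteq> c x) \<longleftrightarrow>
        (\<forall>x\<in>fl G. c (tau0 G x) \<noteq> c x \<and> c (tau2 G x) \<noteq> c x)"
    by (auto simp: pdual_simps)
  moreover have "defect_corners c (pdual G X) = defect_corners c G"
    by (simp add: defect_corners_def pdual_simps)
  ultimately show ?thesis by (simp add: po_colouring_def pdual_simps)
qed

lemma po_colouring_del_edges:
  assumes "flag_system G" "Y \<subseteq> edges G" "po_colouring c G"
  shows "po_colouring c (del_edges G Y)"
proof -
  interpret induced_involution "fl G" "tau1 G" "tau2 G" "fl G - \<Union>Y"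
    by (rule induced_involution_del_edges[OF assms(1,2)])
  have "\<And>y. y \<in> fl G \<Longrightarrow> c (tau2 G y) \<noteq> c y" using assms(3) by (simp add: po_colouring_def)
  hence "card (defect_corners c (del_edges G Y)) \<le> card (defect_corners c G)"
    unfolding defect_corners_def del_edges_simps by (rule card_return_defects_le)
  thus ?thesis using assms(3) by (auto simp: po_colouring_def del_edges_simps)
qed

lemma minor_step_po_colouring:
  assumes "minor_step G H" "po_colouring c G"
  shows "rg H \<and> po_colouring c H"
  using assms
proof (induction rule: minor_step.induct)
  case (del_edge G e)
  have G: "flag_system G" using del_edge rg_iff_flag_system by blast
  have Y: "{e} \<subseteq> edges G" using del_edge by simp
  have "flag_system (del_edges G {e})" by (rule flag_system_del_edges[OF G Y])
  moreover have "nonempty_rg (del_edges G {e})" by (rule nonempty_del_edges[OF del_edge(1) Y])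
  moreover have "po_colouring c (del_edges G {e})" by (rule po_colouring_del_edges[OF G Y del_edge(3)])
  ultimately show ?case by (simp add: rg_iff_flag_system)
next
  case (del_vert G x)
  have G: "flag_system G" using del_vert rg_iff_flag_system by blast
  let ?Y = "{e \<in> edges G. e \<inter> vertex_of G x \<noteq> {}}"
  have "flag_system (del_vertex G x)"
    using flag_system_del_edges[OF G, of ?Y] by (simp add: del_vertex_def Let_def)
  moreover have "po_colouring c (del_vertex G x)"
    using po_colouring_del_edges[OF G _ del_vert(4), of ?Y] by (simp add: del_vertex_def Let_def)
  ultimately show ?case using del_vert(3) rg_iff_flag_system by blast
next
  case (del_isov G)
  then show ?case by (simp add: rg_iff_flag_system)
next
  case (pdual G X)
  have "flag_system (pdual G X)"
    using pdual(1,2) flag_system_pdual rg_iff_flag_system by blast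
  then show ?case using pdual by (simp add: rg_iff_flag_system)
qed

lemma defect_corners_restr_subset: "C \<subseteq> fl G \<Longrightarrow> defect_corners c (restr G C) \<subseteq> defect_corners c G"
  unfolding defect_corners_def restr_simps by blast

lemma finite_defect_corners: "finite (fl G) \<Longrightarrow> finite (defect_corners c G)"
  unfolding defect_corners_def
  by (rule finite_subset[OF _ finite_imageI[of _ "\<lambda>y. {y, tau1 G y}"]]) blast+

lemma po_colouring_restr:
  assumes G: "flag_system G" and c: "po_colouring c G" and C: "C \<subseteq> fl G"
  shows "po_colouring c (restr G C)"
proof -
  have "card (defect_corners c (restr G C)) \<le> card (defect_corners c G)"
    by (rule card_mono[OF finite_defect_corners[OF flag_system_finite[OF G]] defect_corners_restr_subset[OF C]])
  then show ?thesis using c C unfolding po_colouring_def restr_simps by auto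
qed

section \<open>Bouquets\<close>

lemma bouquet_single_vertex:
  assumes B: "flag_system B" "niso B = 0" "bouquet B" and x0: "x0 \<in> fl B"
  shows "fl B \<subseteq> vertex_of B x0"
proof
  have "card {vertex_of B x | x. x \<in> fl B} = 1" using B by (simp add: bouquet_def nverts_def)
  then obtain V where V: "{vertex_of B x | x. x \<in> fl B} = {V}" by (rule card_1_singletonE)
  fix y assume y: "y \<in> fl B"
  have "y \<in> vertex_of B y" unfolding vertex_of_eq_orbit_on by (rule orbit_on_refl)
  moreover have "vertex_of B y = V" "vertex_of B x0 = V" using V y x0 by blast+
  ultimately show "y \<in> vertex_of B x0" by simp
qed

lemma single_vertex_alternating_colouring:
  assumes B: "flag_system B" and x0: "x0 \<in> fl B" "fl B \<subseteq> vertex_of B x0"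
  shows "\<exists>cv::'f \<Rightarrow> bool. \<forall>y\<in>fl B. cv (tau1 B y) \<noteq> cv y \<and> cv (tau2 B y) \<noteq> cv y"
proof -
  interpret involution_pair "fl B" "tau1 B" "tau2 B"
    using flag_system_finite[OF B] fpf_involution_tau[OF B] by unfold_locales
  show ?thesis
    using alternating_colouring_of_orbit[OF x0(1)] x0(2) by (simp add: vertex_of_eq_orbit_on)
qed

lemma tau0_in_loop_orbit:
  assumes B: "flag_system B" and x: "x \<in> fl B" and x0: "x0 \<in> fl B" "fl B \<subseteq> vertex_of B x0"
  shows "tau0 B x \<in> orbit_on (edge_of B x) {tau2 B, first_return (tau1 B) (tau2 B) (edge_of B x)} x"
proof -
  interpret induced_involution "fl B" "tau1 B" "tau2 B" "edge_of B x"
    by (rule induced_involution_edge_of[OF B x])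
  have inv: "\<And>t. t \<in> {tau1 B, tau2 B} \<Longrightarrow> fpf_involution_on (fl B) t"
    using fpf_involution_tau[OF B] by blast
  have "orbit_on (fl B) {tau1 B, tau2 B} x = orbit_on (fl B) {tau1 B, tau2 B} x0"
    using orbit_on_eq[OF inv x0(1)] x0(2) x unfolding vertex_of_eq_orbit_on by blast
  hence "tau0 B x \<in> orbit_on (fl B) {tau1 B, tau2 B} x"
    using x0(2) flag_systemD(1)[OF B x] unfolding vertex_of_eq_orbit_on by blast
  then show ?thesis
    using orbit_inter_A[OF edge_of_self] edge_of_closed(1)[OF B x edge_of_self] by blast
qed

text \<open>Both ends of a loop of a bouquet lie in one orbit of the loop's own vertex involutions,
  along which an orientation of the loop either agrees or disagrees with cv throughout.\<close>
lemma tau0_flips_if_orientable_loop_sub: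
  fixes cv :: "'f \<Rightarrow> bool"
  assumes B: "flag_system B" and x: "x \<in> fl B" and x0: "x0 \<in> fl B" "fl B \<subseteq> vertex_of B x0"
    and cv: "\<And>y. y \<in> fl B \<Longrightarrow> cv (tau1 B y) \<noteq> cv y \<and> cv (tau2 B y) \<noteq> cv y"
    and orientable: "orientable (loop_sub B x)"
  shows "cv (tau0 B x) \<noteq> cv x"
proof -
  interpret induced_involution "fl B" "tau1 B" "tau2 B" "edge_of B x"
    by (rule induced_involution_edge_of[OF B x])
  obtain d :: "'f \<Rightarrow> bool" where
    d: "\<forall>y\<in>edge_of B x. d (tau0 B y) \<noteq> d y \<and> d (ret y) \<noteq> d y \<and> d (tau2 B y) \<noteq> d y"
    using orientable unfolding orientable_def loop_sub_simps[OF B x] by blast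
  have "orbit_on (edge_of B x) {tau2 B, ret} x \<subseteq> {z. (cv z = d z) = (cv x = d x)}"
  proof (rule orbit_on_subsetI)
    fix a t assume a: "a \<in> {z. (cv z = d z) = (cv x = d x)}" "a \<in> edge_of B x" "t \<in> {tau2 B, ret}"
    have "cv (ret a) \<noteq> cv a" by (rule first_return_alternates[OF _ a(2)]) (use cv in blast)
    hence "cv (t a) \<noteq> cv a" using a(2,3) cv[OF A_in[OF a(2)]] by auto
    moreover have "d (t a) \<noteq> d a" using a(2,3) d by auto
    ultimately show "t a \<in> {z. (cv z = d z) = (cv x = d x)}" using a(1) by auto
  qed simp
  hence "(cv (tau0 B x) = d (tau0 B x)) = (cv x = d x)" using tau0_in_loop_orbit[OF B x x0] by blast
  moreover have "d (tau0 B x) \<noteq> d x" using d edge_of_self[of x B] by blast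
  ultimately show ?thesis by auto
qed

lemma orientable_loop_sub_if_tau0_flips:
  fixes cv :: "'f \<Rightarrow> bool"
  assumes B: "flag_system B" and x: "x \<in> fl B"
    and cv: "\<And>y. y \<in> fl B \<Longrightarrow> cv (tau1 B y) \<noteq> cv y \<and> cv (tau2 B y) \<noteq> cv y"
    and flip: "cv (tau0 B x) \<noteq> cv x"
  shows "orientable (loop_sub B x)"
proof -
  interpret induced_involution "fl B" "tau1 B" "tau2 B" "edge_of B x"
    by (rule induced_involution_edge_of[OF B x])
  have "cv (tau0 B y) \<noteq> cv y" if "y \<in> edge_of B x" for y
  proof -
    note r = flag_systemD[OF B x]
    have c2: "cv (tau2 B x) \<noteq> cv x" "cv (tau2 B (tau0 B x)) \<noteq> cv (tau0 B x)"
      using cv x r(1) by blast+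
    have "y = x \<or> y = tau0 B x \<or> y = tau2 B x \<or> y = tau0 B (tau2 B x)"
      using that by (simp add: edge_of_def)
    then show ?thesis using flip c2 r tau02_simps[OF B x] by (elim disjE) auto
  qed
  moreover have "cv (ret y) \<noteq> cv y" if "y \<in> edge_of B x" for y
    by (rule first_return_alternates[OF _ that]) (use cv in blast)
  ultimately have "\<forall>y\<in>edge_of B x. cv (tau0 B y) \<noteq> cv y \<and> cv (ret y) \<noteq> cv y \<and> cv (tau2 B y) \<noteq> cv y"
    using cv A_in by blast
  then show ?thesis unfolding orientable_def loop_sub_simps[OF B x] by blast
qed

lemma loop_sub_orientable_iff:
  fixes cv :: "'f \<Rightarrow> bool"
  assumes B: "flag_system B" and x: "x \<in> fl B" and x0: "x0 \<in> fl B" "fl B \<subseteq> vertex_of B x0"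
    and cv: "\<And>y. y \<in> fl B \<Longrightarrow> cv (tau1 B y) \<noteq> cv y \<and> cv (tau2 B y) \<noteq> cv y"
  shows "orientable (loop_sub B x) \<longleftrightarrow> cv (tau0 B x) \<noteq> cv x"
  using tau0_flips_if_orientable_loop_sub[OF B x x0 cv] orientable_loop_sub_if_tau0_flips[OF B x cv]
  by blast

text \<open>Relative to a proper colouring cv of the single vertex, an arc labelling s of a
  bouquet and a colouring c determine each other by c = cv xor s.\<close>
lemma arc_labelling_iff_po_colouring:
  fixes B :: "'f rgraph" and cv s :: "'f \<Rightarrow> bool"
  assumes cv: "\<forall>y\<in>fl B. cv (tau1 B y) \<noteq> cv y \<and> cv (tau2 B y) \<noteq> cv y"
    and loop: "\<And>y. y \<in> fl B \<Longrightarrow> orientable (loop_sub B y) \<longleftrightarrow> cv (tau0 B y) \<noteq> cv y"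
  shows "((\<forall>x\<in>fl B. s (tau2 B x) = s x) \<and>
          card {{x, tau1 B x} | x. x \<in> fl B \<and> s x \<noteq> s (tau1 B x)} \<le> 2 \<and>
          (\<forall>x\<in>fl B. (orientable (loop_sub B x) \<longrightarrow> s (tau0 B x) = s x) \<and>
                     (\<not> orientable (loop_sub B x) \<longrightarrow> s (tau0 B x) \<noteq> s x)))
         \<longleftrightarrow> po_colouring (\<lambda>y. cv y \<noteq> s y) B"
proof -
  have "{{x, tau1 B x} | x. x \<in> fl B \<and> s x \<noteq> s (tau1 B x)} = defect_corners (\<lambda>y. cv y \<noteq> s y) B"
    unfolding defect_corners_def using cv by (intro Collect_cong ex_cong1) auto
  moreover have "(s (tau2 B x) = s x) \<longleftrightarrow> (cv (tau2 B x) \<noteq> s (tau2 B x)) \<noteq> (cv x \<noteq> s x)"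
    if "x \<in> fl B" for x
    using cv that by auto
  moreover have "((orientable (loop_sub B x) \<longrightarrow> s (tau0 B x) = s x) \<and>
                 (\<not> orientable (loop_sub B x) \<longrightarrow> s (tau0 B x) \<noteq> s x)) \<longleftrightarrow>
                 (cv (tau0 B x) \<noteq> s (tau0 B x)) \<noteq> (cv x \<noteq> s x)"
    if "x \<in> fl B" for x
    using loop[OF that] by auto
  ultimately show ?thesis unfolding po_colouring_def by auto
qed

lemma po_bouquet_iff_po_colouring:
  fixes B :: "'f rgraph"
  assumes B: "flag_system B" "niso B = 0" "fl B \<noteq> {}"
  shows "po_bouquet B \<longleftrightarrow> bouquet B \<and> (\<exists>c. po_colouring c B)"
proof (cases "bouquet B")
  case True
  obtain x0 where x0: "x0 \<in> fl B" using B(3) by blast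
  have V: "fl B \<subseteq> vertex_of B x0" by (rule bouquet_single_vertex[OF B(1,2) True x0])
  obtain cv :: "'f \<Rightarrow> bool" where cv: "\<forall>y\<in>fl B. cv (tau1 B y) \<noteq> cv y \<and> cv (tau2 B y) \<noteq> cv y"
    using single_vertex_alternating_colouring[OF B(1) x0 V] by blast
  have "po_bouquet B \<longleftrightarrow> (\<exists>s. po_colouring (\<lambda>y. cv y \<noteq> s y) B)"
    using arc_labelling_iff_po_colouring[OF cv loop_sub_orientable_iff[OF B(1) _ x0 V]] cv True
    unfolding po_bouquet_def by simp
  also have "\<dots> \<longleftrightarrow> (\<exists>c. po_colouring c B)"
  proof
    assume "\<exists>c. po_colouring c B"
    then obtain c where "po_colouring c B" by blast
    moreover have "(\<lambda>y. cv y \<noteq> (cv y \<noteq> c y)) = c" by auto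
    ultimately show "\<exists>s. po_colouring (\<lambda>y. cv y \<noteq> s y) B" by (intro exI[of _ "\<lambda>y. cv y \<noteq> c y"]) simp
  qed blast
  finally show ?thesis using True by simp
qed (simp add: po_bouquet_def)

section \<open>Pseudo-orientable ribbon graphs have po-colourings\<close>

lemma tau_notin_closed_set:
  assumes G: "flag_system G" and closed: "\<forall>y\<in>S. tau0 G y \<in> S \<and> tau1 G y \<in> S \<and> tau2 G y \<in> S"
    and y: "y \<in> fl G" "y \<notin> S"
  shows "tau0 G y \<notin> S" "tau1 G y \<notin> S" "tau2 G y \<notin> S"
  using closed flag_systemD[OF G y(1)] y(2) by metis+

lemma component_of_disjoint_closed:
  assumes G: "flag_system G" and closed: "\<forall>y\<in>S. tau0 G y \<in> S \<and> tau1 G y \<in> S \<and> tau2 G y \<in> S"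
    and y: "y \<in> fl G" "y \<notin> S"
  shows "component_of G y \<inter> S = {}"
proof (rule ccontr)
  assume "component_of G y \<inter> S \<noteq> {}"
  then obtain z where z: "z \<in> component_of G y" "z \<in> S" by blast
  have "component_of G z \<subseteq> S"
    unfolding component_of_def by (rule orbit_on_subsetI) (use z closed in auto)
  moreover have "y \<in> component_of G z"
    using orbit_on_sym[OF fpf_involution_on_taus[OF G] y(1)] z(1) unfolding component_of_def by blast
  ultimately show False using y(2) by blast
qed

lemma alternating_colouring_outside:
  assumes G: "flag_system G" and closed: "\<forall>y\<in>S. tau0 G y \<in> S \<and> tau1 G y \<in> S \<and> tau2 G y \<in> S"
    and orientable: "\<forall>D\<in>fcomps G. D \<inter> S = {} \<longrightarrow> orientable (restr G D)"
  shows "\<exists>c::'f \<Rightarrow> bool. \<forall>y\<in>fl G - S. c (tau0 G y) \<noteq> c y \<and> c (tau1 G y) \<noteq> c y \<and> c (tau2 G y) \<noteq> c y"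
proof -
  let ?alt = "\<lambda>D (c::'f \<Rightarrow> bool). \<forall>x\<in>D. \<forall>t\<in>{tau0 G, tau1 G, tau2 G}. c (t x) \<noteq> c x"
  have "\<forall>D\<in>{D\<in>fcomps G. D \<inter> S = {}}. \<exists>c. ?alt D c"
    using orientable unfolding orientable_def restr_simps by auto
  then have "\<exists>oc. \<forall>D\<in>{D\<in>fcomps G. D \<inter> S = {}}. ?alt D (oc D)"
    by (rule bchoice)
  then obtain oc where oc: "\<forall>D\<in>{D\<in>fcomps G. D \<inter> S = {}}. ?alt D (oc D)"
    by blast
  have "oc (component_of G (t y)) (t y) \<noteq> oc (component_of G y) y"
    if y: "y \<in> fl G - S" and t: "t \<in> {tau0 G, tau1 G, tau2 G}" for y t
  proof -
    have "component_of G y \<in> {D\<in>fcomps G. D \<inter> S = {}}"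
      using component_of_disjoint_closed[OF G closed] y fcomps_eq by blast
    hence "?alt (component_of G y) (oc (component_of G y))" using oc by blast
    hence "oc (component_of G y) (t y) \<noteq> oc (component_of G y) y"
      using component_of_self[of y G] t by blast
    moreover have "t y \<in> component_of G y"
      using component_of_closed[OF G _ component_of_self] y t by blast
    hence "component_of G (t y) = component_of G y" using component_of_eq[OF G] y by blast
    ultimately show ?thesis by simp
  qed
  then show ?thesis by (intro exI[of _ "\<lambda>y. oc (component_of G y) y"]) blast
qed

lemma po_colouring_extend:
  fixes G :: "'f rgraph"
  assumes G: "flag_system G" and S: "S \<subseteq> fl G"
    and closed: "\<forall>y\<in>S. tau0 G y \<in> S \<and> tau1 G y \<in> S \<and> tau2 G y \<in> S"
    and cS: "po_colouring cS (restr G S)"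
    and orientable: "\<forall>D\<in>fcomps G. D \<inter> S = {} \<longrightarrow> orientable (restr G D)"
  shows "\<exists>c. po_colouring c G"
proof -
  obtain co :: "'f \<Rightarrow> bool" where
    co: "\<forall>y\<in>fl G - S. co (tau0 G y) \<noteq> co y \<and> co (tau1 G y) \<noteq> co y \<and> co (tau2 G y) \<noteq> co y"
    using alternating_colouring_outside[OF G closed orientable] by blast
  define c where "c y = (if y \<in> S then cS y else co y)" for y
  have "c (tau0 G y) \<noteq> c y \<and> c (tau2 G y) \<noteq> c y" if y: "y \<in> fl G" for y
  proof (cases "y \<in> S")
    case True
    then show ?thesis using closed cS unfolding c_def po_colouring_def restr_simps by auto
  next
    case False
    then show ?thesis using tau_notin_closed_set[OF G closed y False] co y unfolding c_def by auto
  qed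
  moreover have "defect_corners c G \<subseteq> defect_corners cS (restr G S)"
  proof
    fix P assume "P \<in> defect_corners c G"
    then obtain y where y: "P = {y, tau1 G y}" "y \<in> fl G" "c (tau1 G y) = c y"
      unfolding defect_corners_def by blast
    have "y \<in> S" using y(2,3) tau_notin_closed_set[OF G closed y(2)] co unfolding c_def by fastforce
    then show "P \<in> defect_corners cS (restr G S)"
      using y closed unfolding defect_corners_def restr_simps c_def by auto
  qed
  moreover have "finite (defect_corners cS (restr G S))"
    by (rule finite_defect_corners) (simp add: restr_simps finite_subset[OF S flag_system_finite[OF G]])
  ultimately show ?thesis
    using cS card_mono unfolding po_colouring_def by (metis order_trans)
qed

lemma po_colouring_if_pseudo_orientable:
  assumes rg: "rg G" and po: "pseudo_orientable G"
  shows "\<exists>c. po_colouring c G"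
proof -
  have G: "flag_system G" using rg rg_iff_flag_system by blast
  show ?thesis
  proof (cases "\<exists>C\<in>fcomps G. po_conn (restr G C) \<and> (\<forall>D\<in>fcomps G. D \<noteq> C \<longrightarrow> orientable (restr G D))")
    case True
    then obtain C where C: "C \<in> fcomps G" "po_conn (restr G C)"
      "\<forall>D\<in>fcomps G. D \<noteq> C \<longrightarrow> orientable (restr G D)" by blast
    obtain x where x: "x \<in> fl G" "C = component_of G x" using C(1) unfolding fcomps_eq by blast
    have CG: "C \<subseteq> fl G" using component_of_subset[OF G x(1)] x by simp
    have closed: "\<forall>y\<in>C. tau0 G y \<in> C \<and> tau1 G y \<in> C \<and> tau2 G y \<in> C"
      using component_of_closed[OF G x(1)] x by simp
    let ?K = "restr G C"
    obtain X where X: "qtree_conn ?K X" "po_bouquet (pdual ?K X)" using C(2) unfolding po_conn_def by blast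
    have "flag_system (pdual ?K X)"
      using flag_system_pdual[OF flag_system_restr[OF G CG closed]] X(1) unfolding qtree_conn_def by blast
    moreover have "fl (pdual ?K X) \<noteq> {}" using component_of_self[of x G] x by (auto simp: pdual_simps restr_simps)
    ultimately obtain c where "po_colouring c ?K"
      using po_bouquet_iff_po_colouring X(2) by (fastforce simp: pdual_simps restr_simps)
    moreover have "\<forall>D\<in>fcomps G. D \<inter> C = {} \<longrightarrow> orientable (restr G D)"
      using C(3) component_of_self[of x G] x by blast
    ultimately show ?thesis by (rule po_colouring_extend[OF G CG closed])
  next
    case False
    hence "\<forall>D\<in>fcomps G. orientable (restr G D)" using po unfolding pseudo_orientable_def by blast
    moreover have "po_colouring (\<lambda>_. True) (restr G {})"
      by (simp add: po_colouring_def defect_corners_def restr_simps)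
    ultimately show ?thesis by (intro po_colouring_extend[OF G]) auto
  qed
qed

section \<open>Quasi-trees and partial duals\<close>

text \<open>The boundary components of the spanning subgraph on X are traced by tau0 and the
  corner map skipping the other edges, which are the vertex involutions of the partial dual
  on the flags of X; vertices avoiding X are unaffected, and become isolated on deletion.\<close>
lemma nbound_spanning_subgraph_eq_nverts_pdual:
  assumes G: "flag_system G" and X: "X \<subseteq> edges G"
  shows "nbound (del_edges G (edges G - X)) = nverts (pdual G X)"
proof -
  let ?A = "\<Union>X" and ?g = "tau2 (pdual G X)"
  interpret P: induced_involution "fl G" "tau1 G" ?g ?A by (rule induced_involution_pdual[OF G X])
  have agree: "\<And>z. z \<notin> ?A \<Longrightarrow> tau2 G z = ?g z" by (simp add: pdual_simps)
  have AG: "fl G - (fl G - ?A) = ?A" using P.A_subset by blast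
  have "orbit_on ?A {?g, P.ret} = orbit_on ?A {tau0 G, first_return (tau1 G) (tau2 G) ?A}"
  proof (rule orbit_on_cong)
    fix a b assume a: "a \<in> ?A"
    have "first_return (tau1 G) (tau2 G) ?A a = P.ret a" by (rule P.first_return_cong[OF agree a])
    moreover have "?g a = tau0 G a" using a by (simp add: pdual_simps)
    ultimately show "(\<exists>t\<in>{?g, P.ret}. b = t a) \<longleftrightarrow> (\<exists>t\<in>{tau0 G, first_return (tau1 G) (tau2 G) ?A}. b = t a)"
      by simp
  qed
  moreover have "{orbit_on (fl G) {tau1 G, ?g} x | x. x \<in> fl G \<and> orbit_on (fl G) {tau1 G, ?g} x \<subseteq> fl G - ?A} =
            {orbit_on (fl G) {tau1 G, tau2 G} x | x. x \<in> fl G \<and> orbit_on (fl G) {tau1 G, tau2 G} x \<subseteq> fl G - ?A}"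
    by (rule orbits_avoiding_change_off) (simp add: pdual_simps)
  ultimately show ?thesis
    using P.card_orbits
    unfolding nverts_eq_card_orbits nbound_def orb_eq_orbit_on del_edges_simps Union_diff_edges[OF G X] AG
      vertex_of_eq_orbit_on pdual_simps
    by simp
qed

context
  fixes B :: "'f rgraph" and y :: 'f
  assumes B: "flag_system B" and y: "y \<in> fl B"
    and nonloop: "vertex_of B (tau0 B y) \<noteq> vertex_of B y"
begin

lemma nonloop_ends:
  shows "tau0 B y \<notin> vertex_of B y" "tau0 B (tau2 B y) \<notin> vertex_of B y"
    "vertex_of B (tau0 B (tau2 B y)) = vertex_of B (tau0 B y)"
proof -
  note r = flag_systemD[OF B y]
  show "tau0 B y \<notin> vertex_of B y" using vertex_of_eq[OF B y] nonloop by blast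
  show "vertex_of B (tau0 B (tau2 B y)) = vertex_of B (tau0 B y)"
    using vertex_of_tau2[OF B r(1)] r(10) by simp
  then show "tau0 B (tau2 B y) \<notin> vertex_of B y"
    using vertex_of_eq[OF B y] nonloop by metis
qed

lemma vertices_split_at_nonloop:
  "{vertex_of B x | x. x \<in> fl B} =
   {vertex_of B x | x. x \<in> fl B \<and> vertex_of B x \<subseteq> fl B - edge_of B y} \<union> {vertex_of B y, vertex_of B (tau0 B y)}"
proof (intro equalityI subsetI)
  fix Q assume "Q \<in> {vertex_of B x | x. x \<in> fl B}"
  then obtain x where x: "Q = vertex_of B x" "x \<in> fl B" by blast
  show "Q \<in> {vertex_of B x | x. x \<in> fl B \<and> vertex_of B x \<subseteq> fl B - edge_of B y} \<union>
            {vertex_of B y, vertex_of B (tau0 B y)}"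
  proof (cases "Q \<subseteq> fl B - edge_of B y")
    case False
    then obtain z where z: "z \<in> Q" "z \<in> edge_of B y" using x vertex_of_subset[OF B x(2)] by blast
    have "Q = vertex_of B z" using vertex_of_eq[OF B x(2)] z x by simp
    moreover have "z = y \<or> z = tau0 B y \<or> z = tau2 B y \<or> z = tau0 B (tau2 B y)"
      using z(2) by (simp add: edge_of_def)
    ultimately show ?thesis using vertex_of_tau2[OF B y] nonloop_ends(3) by auto
  qed (use x in blast)
qed (use y flag_systemD(1)[OF B y] in blast)

lemma card_vertices_at_nonloop:
  "card {vertex_of B x | x. x \<in> fl B} =
   card {vertex_of B x | x. x \<in> fl B \<and> vertex_of B x \<subseteq> fl B - edge_of B y} + 2"
proof -
  let ?avoid = "{vertex_of B x | x. x \<in> fl B \<and> vertex_of B x \<subseteq> fl B - edge_of B y}"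
  have "y \<in> vertex_of B y" "tau0 B y \<in> vertex_of B (tau0 B y)"
    unfolding vertex_of_eq_orbit_on by (rule orbit_on_refl)+
  moreover have "y \<in> edge_of B y" "tau0 B y \<in> edge_of B y" by (simp_all add: edge_of_def)
  ultimately have "?avoid \<inter> {vertex_of B y, vertex_of B (tau0 B y)} = {}" by blast
  moreover have "finite ?avoid"
    by (rule finite_subset[OF _ finite_imageI[OF flag_system_finite[OF B], of "vertex_of B"]]) blast
  ultimately show ?thesis
    using vertices_split_at_nonloop nonloop by (simp add: card_Un_disjoint)
qed

lemma pdual_nonloop_single_orbit:
  defines "g \<equiv> tau2 (pdual B {edge_of B y})"
  shows "{orbit_on (edge_of B y) {g, first_return (tau1 B) g (edge_of B y)} x | x. x \<in> edge_of B y} =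
         {orbit_on (edge_of B y) {g, first_return (tau1 B) g (edge_of B y)} y}"
proof -
  let ?e = "edge_of B y"
  have E: "{?e} \<subseteq> edges B" using edge_of_in_edges[OF y] by simp
  interpret P: induced_involution "fl B" "tau1 B" g ?e
    using induced_involution_pdual[OF B E] unfolding g_def by simp
  interpret T: induced_involution "fl B" "tau1 B" "tau2 B" ?e
    by (rule induced_involution_edge_of[OF B y])
  have yy: "y \<in> ?e" by (rule edge_of_self)
  have g: "\<And>z. z \<in> ?e \<Longrightarrow> g z = tau0 B z" "\<And>z. z \<notin> ?e \<Longrightarrow> g z = tau2 B z"
    by (simp_all add: g_def pdual_simps)
  have "T.ret y = tau2 B y"
  proof -
    have "T.ret y \<in> ?e" "T.ret y \<noteq> y" using T.first_return_in T.first_return_neq yy by blast+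
    moreover have "T.ret y \<in> vertex_of B y"
      unfolding vertex_of_eq_orbit_on by (rule T.first_return_in_orbit[OF yy])
    ultimately show ?thesis using nonloop_ends by (auto simp: edge_of_def)
  qed
  hence ret_y: "P.ret y = tau2 B y" using T.first_return_cong[OF g(2) yy] by simp
  let ?O = "orbit_on ?e {g, P.ret} y"
  have "?e \<subseteq> ?O"
  proof -
    have "y \<in> ?O" by (rule orbit_on_refl)
    moreover have "tau0 B y \<in> ?O" using orbit_on_step[OF \<open>y \<in> ?O\<close> yy, of g] g(1)[OF yy] by simp
    moreover have t2: "tau2 B y \<in> ?O" using orbit_on_step[OF \<open>y \<in> ?O\<close> yy, of P.ret] ret_y by simp
    moreover have "tau0 B (tau2 B y) \<in> ?O"
      using orbit_on_step[OF t2, of g] g(1) by (simp add: edge_of_def)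
    ultimately show ?thesis by (auto simp: edge_of_def)
  qed
  moreover have "\<And>t. t \<in> {g, P.ret} \<Longrightarrow> fpf_involution_on ?e t"
    using P.fpf_involution_g_A P.fpf_involution_first_return by blast
  ultimately show ?thesis using orbit_on_eq[of "{g, P.ret}" ?e y] yy by blast
qed

lemma nverts_pdual_nonloop: "nverts (pdual B {edge_of B y}) + 1 = nverts B"
proof -
  let ?e = "edge_of B y" and ?g = "tau2 (pdual B {edge_of B y})"
  have E: "{?e} \<subseteq> edges B" using edge_of_in_edges[OF y] by simp
  interpret P: induced_involution "fl B" "tau1 B" ?g ?e
    using induced_involution_pdual[OF B E] by simp
  have "{orbit_on (fl B) {tau1 B, ?g} x | x. x \<in> fl B \<and> orbit_on (fl B) {tau1 B, ?g} x \<subseteq> fl B - ?e} =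
        {orbit_on (fl B) {tau1 B, tau2 B} x | x. x \<in> fl B \<and> orbit_on (fl B) {tau1 B, tau2 B} x \<subseteq> fl B - ?e}"
    by (rule orbits_avoiding_change_off) (simp add: pdual_simps)
  then show ?thesis
    using P.card_orbits pdual_nonloop_single_orbit card_vertices_at_nonloop
    unfolding nverts_eq_card_orbits vertex_of_eq_orbit_on
    by (simp add: pdual_simps)
qed

end

lemma component_of_pdual: "component_of (pdual G X) = component_of G"
  unfolding component_of_def pdual_simps by (rule orbit_on_cong) auto

lemma nverts_all_loops:
  assumes B: "flag_system B" and loops: "\<forall>y\<in>fl B. vertex_of B (tau0 B y) = vertex_of B y"
    and connected: "\<forall>z\<in>fl B. component_of B z = fl B" and z0: "z0 \<in> fl B"
  shows "nverts B = 1 + niso B"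
proof -
  have "vertex_of B z = fl B" if z: "z \<in> fl B" for z
  proof
    show "vertex_of B z \<subseteq> fl B" by (rule vertex_of_subset[OF B z])
    have "component_of B z \<subseteq> vertex_of B z"
      unfolding component_of_def
    proof (rule orbit_on_subsetI)
      fix a t assume a: "a \<in> vertex_of B z" "a \<in> fl B" "t \<in> {tau0 B, tau1 B, tau2 B}"
      have "vertex_of B a = vertex_of B z" by (rule vertex_of_eq[OF B z a(1)])
      moreover have "tau0 B a \<in> vertex_of B (tau0 B a)"
        unfolding vertex_of_eq_orbit_on by (rule orbit_on_refl)
      ultimately show "t a \<in> vertex_of B z"
        using a(3) loops a(2) tau12_in_vertex_of[OF B a(2)] by auto
    qed (simp add: vertex_of_eq_orbit_on orbit_on_refl)
    then show "fl B \<subseteq> vertex_of B z" using connected z by simp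
  qed
  hence "{vertex_of B x | x. x \<in> fl B} = {fl B}" using z0 by blast
  thus ?thesis by (simp add: nverts_def)
qed

lemma mem_Union_symdiff_edge:
  assumes K: "flag_system K" and X: "X \<subseteq> edges K" and e: "e \<in> edges K"
  shows "x \<in> \<Union>((X - {e}) \<union> ({e} - X)) \<longleftrightarrow> (x \<in> e) \<noteq> (x \<in> \<Union>X)"
  using edges_disjoint[OF K _ e] X by blast

lemma nverts_pdual_pdual_edge:
  assumes K: "flag_system K" and X: "X \<subseteq> edges K" and e: "e \<in> edges K"
  shows "nverts (pdual (pdual K X) {e}) = nverts (pdual K ((X - {e}) \<union> ({e} - X)))"
proof -
  have "tau2 (pdual (pdual K X) {e}) = tau2 (pdual K ((X - {e}) \<union> ({e} - X)))"
    using mem_Union_symdiff_edge[OF K X e] by (auto simp: pdual_simps fun_eq_iff)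
  then show ?thesis by (simp add: nverts_def vertex_of_def orb_def pdual_simps)
qed

text \<open>A partial dual with the fewest vertices has only loops: dualising a non-loop edge would
  merge its two end vertices.\<close>
lemma exists_pdual_bouquet:
  assumes K: "flag_system K" and connected: "\<forall>z\<in>fl K. component_of K z = fl K"
    and z0: "z0 \<in> fl K"
  shows "\<exists>X. X \<subseteq> edges K \<and> nverts (pdual K X) = 1 + niso K"
proof -
  obtain X0 where X0: "X0 \<subseteq> edges K" "\<And>X. X \<subseteq> edges K \<Longrightarrow> nverts (pdual K X0) \<le> nverts (pdual K X)"
    using ex_has_least_nat[of "\<lambda>X. X \<subseteq> edges K" "{}" "\<lambda>X. nverts (pdual K X)"] by blast
  let ?B = "pdual K X0"
  have B: "flag_system ?B" by (rule flag_system_pdual[OF K X0(1)])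
  have loops: "\<forall>y\<in>fl ?B. vertex_of ?B (tau0 ?B y) = vertex_of ?B y"
  proof (rule ccontr)
    assume "\<not> ?thesis"
    then obtain y where y: "y \<in> fl ?B" "vertex_of ?B (tau0 ?B y) \<noteq> vertex_of ?B y" by blast
    have yK: "y \<in> fl K" using y by (simp add: pdual_simps)
    let ?e = "edge_of K y"
    have eK: "?e \<in> edges K" by (rule edge_of_in_edges[OF yK])
    have "nverts (pdual K ((X0 - {?e}) \<union> ({?e} - X0))) + 1 = nverts ?B"
      using nverts_pdual_nonloop[OF B y] edge_of_pdual[OF K X0(1) yK]
        nverts_pdual_pdual_edge[OF K X0(1) eK] by simp
    moreover have "nverts ?B \<le> nverts (pdual K ((X0 - {?e}) \<union> ({?e} - X0)))"
      by (rule X0(2)) (use X0(1) eK in blast)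
    ultimately show False by simp
  qed
  have "nverts ?B = 1 + niso ?B"
    by (rule nverts_all_loops[OF B loops]) (use connected z0 in \<open>simp_all add: component_of_pdual pdual_simps\<close>)
  thus ?thesis using X0(1) by (auto simp: pdual_simps)
qed

section \<open>Ribbon graphs with a po-colouring are pseudo-orientable\<close>

lemma card_eq_swapped_by_involution:
  assumes "\<forall>y\<in>P. t y \<in> Q \<and> t (t y) = y" "\<forall>y\<in>Q. t y \<in> P \<and> t (t y) = y"
  shows "card P = card Q"
  by (rule bij_betw_same_card[of t], rule bij_betw_byWitness[where f' = t]) (use assms in auto)

text \<open>tau0 exchanges the two colour classes of D, and tau1 exchanges them outside the
  defects; so both colours occur equally often on defect flags, and the defect corners of
  each colour come in tau1-pairs.\<close>
lemma even_card_defects: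
  fixes c :: "'f \<Rightarrow> bool"
  assumes G: "flag_system G" and D: "D \<subseteq> fl G"
    and closed: "\<forall>y\<in>D. tau0 G y \<in> D \<and> tau1 G y \<in> D" and flip: "\<forall>y\<in>D. c (tau0 G y) \<noteq> c y"
  shows "even (card {{y, tau1 G y} | y. y \<in> D \<and> c (tau1 G y) = c y})"
proof -
  let ?t0 = "tau0 G" and ?t1 = "tau1 G"
  let ?M = "{y \<in> D. c (?t1 y) = c y}" and ?T = "{y \<in> D. c y}" and ?F = "{y \<in> D. \<not> c y}"
  have inv: "?t0 (?t0 y) = y" "?t1 (?t1 y) = y" if "y \<in> D" for y
    using flag_systemD[OF G subsetD[OF D that]] by simp_all
  have finite: "finite D" using D flag_system_finite[OF G] finite_subset by blast
  have "card ?T = card ?F"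
    by (rule card_eq_swapped_by_involution[of _ ?t0]) (use closed flip inv in auto)
  moreover have "card (?T - ?M) = card (?F - ?M)"
    by (rule card_eq_swapped_by_involution[of _ ?t1]) (use closed inv in auto)
  moreover have "card ?T = card (?T \<inter> ?M) + card (?T - ?M)" "card ?F = card (?F \<inter> ?M) + card (?F - ?M)"
    using finite by (simp_all add: card_Int_Diff)
  ultimately have TF: "card (?T \<inter> ?M) = card (?F \<inter> ?M)" by simp
  have "?M = (?T \<inter> ?M) \<union> (?F \<inter> ?M)" by blast
  moreover have "card ((?T \<inter> ?M) \<union> (?F \<inter> ?M)) = card (?T \<inter> ?M) + card (?F \<inter> ?M)"
    by (rule card_Un_disjoint) (use finite in auto)
  ultimately have "card ?M = card (?T \<inter> ?M) + card (?F \<inter> ?M)" by simp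
  hence "card ?M = 2 * card (?T \<inter> ?M)" using TF by simp
  moreover have "card ?M = 2 * card ((\<lambda>y. {y, ?t1 y}) ` ?M)"
    by (rule card_fpf_involution_pairs) (use finite closed inv flag_systemD(8)[OF G] D in \<open>auto simp: fpf_involution_on_def\<close>)
  moreover have "card (?T \<inter> ?M) = 2 * card ((\<lambda>y. {y, ?t1 y}) ` (?T \<inter> ?M))"
    by (rule card_fpf_involution_pairs) (use finite closed inv flag_systemD(8)[OF G] D in \<open>auto simp: fpf_involution_on_def\<close>)
  moreover have "{{y, ?t1 y} | y. y \<in> D \<and> c (?t1 y) = c y} = (\<lambda>y. {y, ?t1 y}) ` ?M" by blast
  ultimately show ?thesis by simp
qed

lemma card_component_defects_ge_2:
  assumes G: "flag_system G" and c: "po_colouring c G" and w: "w \<in> fl G"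
    and defect: "defect_corners c (restr G (component_of G w)) \<noteq> {}"
  shows "2 \<le> card (defect_corners c (restr G (component_of G w)))"
proof -
  have sub: "component_of G w \<subseteq> fl G" by (rule component_of_subset[OF G w])
  have "\<forall>y\<in>component_of G w. tau0 G y \<in> component_of G w \<and> tau1 G y \<in> component_of G w"
    using component_of_closed[OF G w] by blast
  moreover have "\<forall>y\<in>component_of G w. c (tau0 G y) \<noteq> c y"
    using c sub unfolding po_colouring_def by blast
  ultimately have "even (card (defect_corners c (restr G (component_of G w))))"
    unfolding defect_corners_def restr_simps by (rule even_card_defects[OF G sub])
  moreover have "card (defect_corners c (restr G (component_of G w))) > 0"
    using defect finite_defect_corners[of "restr G (component_of G w)"]
      finite_subset[OF sub flag_system_finite[OF G]]
    by (simp add: card_gt_0_iff restr_simps)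
  moreover have "even n \<Longrightarrow> 0 < n \<Longrightarrow> 2 \<le> n" for n :: nat by presburger
  ultimately show ?thesis by blast
qed

lemma defect_corners_components_disjoint:
  assumes G: "flag_system G" and x: "x \<in> fl G" and z: "z \<in> fl G"
    and distinct: "component_of G z \<noteq> component_of G x"
  shows "defect_corners c (restr G (component_of G x)) \<inter> defect_corners c (restr G (component_of G z)) = {}"
proof -
  have "component_of G x \<inter> component_of G z = {}"
    using component_of_eq[OF G x] component_of_eq[OF G z] distinct by blast
  moreover have "a \<in> component_of G w" if "{a, tau1 G a} = {b, tau1 G b}" "b \<in> component_of G w" "w \<in> fl G"
    for a b w
    using that component_of_closed[OF G that(3) that(2)] by (auto simp: doubleton_eq_iff)
  ultimately show ?thesis unfolding defect_corners_def restr_simps using x z by blast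
qed

lemma defects_in_single_component:
  assumes G: "flag_system G" and c: "po_colouring c G" and x: "x \<in> fl G" and z: "z \<in> fl G"
    and distinct: "component_of G z \<noteq> component_of G x"
    and defect: "defect_corners c (restr G (component_of G x)) \<noteq> {}"
  shows "defect_corners c (restr G (component_of G z)) = {}"
proof (rule ccontr)
  let ?dC = "\<lambda>w. defect_corners c (restr G (component_of G w))"
  assume "?dC z \<noteq> {}"
  have fin: "finite (defect_corners c G)" by (rule finite_defect_corners[OF flag_system_finite[OF G]])
  have "card (?dC x \<union> ?dC z) \<ge> 4"
    using card_component_defects_ge_2[OF G c x defect] card_component_defects_ge_2[OF G c z \<open>?dC z \<noteq> {}\<close>]
      card_Un_disjoint defect_corners_components_disjoint[OF G x z distinct]
      finite_subset[OF defect_corners_restr_subset[OF component_of_subset[OF G x]] fin]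
      finite_subset[OF defect_corners_restr_subset[OF component_of_subset[OF G z]] fin]
    by (metis add_mono_thms_linordered_semiring(1) numeral_Bit0)
  moreover have "card (?dC x \<union> ?dC z) \<le> card (defect_corners c G)"
    using defect_corners_restr_subset component_of_subset[OF G x] component_of_subset[OF G z]
    by (intro card_mono[OF fin]) blast
  ultimately show False using c unfolding po_colouring_def by simp
qed

lemma po_conn_if_connected:
  assumes K: "flag_system K" "niso K = 0" and connected: "\<forall>z\<in>fl K. component_of K z = fl K"
    and z0: "z0 \<in> fl K" and c: "po_colouring c K"
  shows "po_conn K"
proof -
  obtain X where X: "X \<subseteq> edges K" "nverts (pdual K X) = 1"
    using exists_pdual_bouquet[OF K(1) connected z0] K(2) by auto
  have "qtree_conn K X"
    unfolding qtree_conn_def using X nbound_spanning_subgraph_eq_nverts_pdual[OF K(1) X(1)] by simp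
  moreover have "po_bouquet (pdual K X)"
    using po_bouquet_iff_po_colouring[OF flag_system_pdual[OF K(1) X(1)]] X(2) K(2) z0 c
    by (auto simp: bouquet_def pdual_simps)
  ultimately show ?thesis unfolding po_conn_def by blast
qed

lemma po_conn_isov: "po_conn (isov G)"
proof -
  have "qtree_conn (isov G) {}"
    unfolding qtree_conn_def by (simp add: edges_def nbound_def del_edges_simps isov_def)
  moreover have "po_bouquet (pdual (isov G) {})"
    unfolding po_bouquet_def bouquet_def by (simp add: nverts_def pdual_simps isov_def)
  ultimately show ?thesis unfolding po_conn_def by blast
qed

lemma component_of_restr_component:
  assumes G: "flag_system G" and x: "x \<in> fl G" and z: "z \<in> component_of G x"
  shows "component_of (restr G (component_of G x)) z = component_of G x"
proof -
  have "component_of (restr G (component_of G x)) z = orbit_on (component_of G x) {tau0 G, tau1 G, tau2 G} z"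
    by (simp add: component_of_def[of "restr G _"] restr_simps)
  also have "\<dots> = orbit_on (fl G) {tau0 G, tau1 G, tau2 G} z"
    by (rule orbit_on_restrict[OF component_of_subset[OF G x] _ z]) (use component_of_closed[OF G x] in auto)
  also have "\<dots> = component_of G x" using component_of_eq[OF G x z] by (simp add: component_of_def)
  finally show ?thesis .
qed

lemma orientable_if_no_defects:
  assumes G: "flag_system G" and c: "po_colouring c G" and D: "D \<subseteq> fl G"
    and none: "defect_corners c (restr G D) = {}"
  shows "orientable (restr G D)"
proof -
  have "c (tau1 G y) \<noteq> c y" if "y \<in> D" for y
    using none that unfolding defect_corners_def restr_simps by blast
  then show ?thesis using c D unfolding orientable_def po_colouring_def restr_simps by blast
qed

lemma pseudo_orientable_if_po_colouring:
  assumes rg: "rg H" and c: "po_colouring c H"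
  shows "pseudo_orientable H"
proof (cases "fl H = {}")
  case True
  hence "niso H > 0" "fcomps H = {}" using rg by (simp_all add: rg_def nonempty_rg_def fcomps_def)
  then show ?thesis unfolding pseudo_orientable_def using po_conn_isov by blast
next
  case False
  have H: "flag_system H" using rg rg_iff_flag_system by blast
  let ?dC = "\<lambda>w. defect_corners c (restr H (component_of H w))"
  obtain x0 where x0: "x0 \<in> fl H"
    and others: "\<And>z. z \<in> fl H \<Longrightarrow> component_of H z \<noteq> component_of H x0 \<Longrightarrow> ?dC z = {}"
  proof (cases "\<exists>x\<in>fl H. ?dC x \<noteq> {}")
    case True
    then obtain x where "x \<in> fl H" "?dC x \<noteq> {}" by blast
    then show ?thesis using that defects_in_single_component[OF H c] by blast
  next
    case False
    then show ?thesis using that \<open>fl H \<noteq> {}\<close> by blast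
  qed
  let ?C = "component_of H x0"
  have "po_conn (restr H ?C)"
  proof (rule po_conn_if_connected)
    show "flag_system (restr H ?C)"
      using flag_system_restr[OF H component_of_subset[OF H x0]] component_of_closed[OF H x0] by blast
    show "po_colouring c (restr H ?C)"
      by (rule po_colouring_restr[OF H c component_of_subset[OF H x0]])
  qed (use component_of_restr_component[OF H x0] component_of_self[of x0 H] in \<open>auto simp: restr_simps\<close>)
  moreover have "orientable (restr H D)" if D: "D \<in> fcomps H" "D \<noteq> ?C" for D
  proof -
    obtain z where z: "z \<in> fl H" "D = component_of H z" using D(1) unfolding fcomps_eq by blast
    show ?thesis
      using orientable_if_no_defects[OF H c component_of_subset[OF H z(1)] others[OF z(1)]] z D(2)
      by simp
  qed
  moreover have "?C \<in> fcomps H" using x0 unfolding fcomps_eq by blast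
  ultimately show ?thesis unfolding pseudo_orientable_def by blast
qed

theorem proposition3p9:
  fixes G H :: "'f rgraph"
  assumes "rg G"
    and "pseudo_orientable G"
    and "minor_step\<^sup>*\<^sup>* G H"
  shows "pseudo_orientable H"
proof -
  obtain c where "po_colouring c G" using po_colouring_if_pseudo_orientable[OF assms(1,2)] by blast
  have "rg H \<and> po_colouring c H"
    using assms(3)
  proof (induction rule: rtranclp_induct)
    case base
    then show ?case using assms(1) \<open>po_colouring c G\<close> by blast
  next
    case (step K L)
    then show ?case using minor_step_po_colouring by blast
  qed
  then show ?thesis using pseudo_orientable_if_po_colouring by blast
qed

end
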